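(* Let $[X,d,m]$ be a metric random walk space with invariant and reversible measure $\nu$, where $(X,d)$ is a length space and $\nu$ is doubling, satisfying the standing assumptions below, and let $\Omega\subset X$ be a $\nu$-measurable set of finite diameter with $0<\nu(\Omega)<\nu(X)$. Suppose that for some $\alpha>0$ and some $\varepsilon>0$ either $m_x\ge\alpha\,m^{\nu,\varepsilon}_x$ for all $x\in X$, or (for some $0<\delta<\varepsilon$) $m_x\ge\alpha\,m^{\nu,\varepsilon,\delta}_x$ for all $x\in X$. Then $(m,\nu)$ satisfies a $p$-Poincaré inequality in $\Omega$ for every $p\ge1$.
   Context: A metric random walk space $[X,d,m]$ is a Polish metric space $(X,d)$ with a family $m=(m_x)_{x\in X}$ of Borel probability measures such that $x\mapsto m_x(A)$ is Borel measurable for every Borel $A$ and each $m_x$ has finite first moment; $\nu$ invariant: $\nu(A)=\int_X m_x(A)\,d\nu(x)$; reversible: $dm_x(y)\,d\nu(x)=dm_y(x)\,d\nu(y)$. Standing assumptions: $\nu(X)<\infty$ and $\nu$ is ergodic for $m$ (every Borel $B$ with $m_x(B)=1$ for all $x\in B$ has $\nu(B)\in\{0,\nu(X)\}$). A length space: $d(x,y)$ is the infimum of lengths of curves joining $x,y$. $\nu$ doubling: $0<\nu(B(x,2r))\le C_d\,\nu(B(x,r))<\infty$ for all $x,r>0$. $m^{\nu,\varepsilon}_x:=\nu\llcorner B(x,\varepsilon)/\nu(B(x,\varepsilon))$ and $m^{\nu,\varepsilon,\delta}_x:=\nu\llcorner(B(x,\varepsilon)\setminus\overline{B(x,\delta)})/\nu(B(x,\varepsilon)\setminus\overline{B(x,\delta)})$;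 inequalities between measures are setwise. $\partial_m\Omega:=\{x\in X\setminus\Omega: m_x(\Omega)>0\}$, $\Omega_m:=\Omega\cup\partial_m\Omega$; for $u:\Omega\to\mathbb{R}$ and $\psi$ on $\partial_m\Omega$, $u_\psi$ equals $u$ on $\Omega$ and $\psi$ on $\partial_m\Omega$. For $q\ge1$, $(m,\nu)$ satisfies a $q$-Poincaré inequality in $\Omega$ if there is $\lambda>0$ such that $\lambda\int_\Omega|u(x)|^q\,d\nu(x)\le\int_\Omega\int_{\Omega_m}|u_\psi(y)-u(x)|^q\,dm_x(y)\,d\nu(x)+\int_{\partial_m\Omega}|\psi(y)|^q\,d\nu(y)$ for all $u\in L^q(\Omega,\nu)$ and all $\psi\in L^q(\partial_m\Omega,\nu)$. *)

theory Defs
  imports "HOL-Analysis.Analysis"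
begin

(* Metric random walk space [X,d,m] with invariant, reversible measure nu.
   X is the whole type 'a (Polish metric space); Borel sets = sets borel. *)
definition metric_random_walk_space :: "('a::polish_space \<Rightarrow> 'a measure) \<Rightarrow> bool" where
  "metric_random_walk_space m \<longleftrightarrow>
     (\<forall>x. sets (m x) = sets borel \<and> emeasure (m x) UNIV = 1) \<and>
     (\<forall>A \<in> sets borel. (\<lambda>x. emeasure (m x) A) \<in> borel_measurable borel) \<and>
     (\<forall>x. (\<integral>\<^sup>+ y. ennreal (dist x y) \<partial>(m x)) < \<infinity>)"

definition invariant_measure :: "('a::polish_space \<Rightarrow> 'a measure) \<Rightarrow> 'a measure \<Rightarrow> bool" where
  "invariant_measure m \<nu> \<longleftrightarrow> sets \<nu> = sets borel \<and>
     (\<forall>A \<in> sets borel. emeasure \<nu> A = (\<integral>\<^sup>+ x. emeasure (m x) A \<partial>\<nu>))"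

(* dm_x(y) d\<nu>(x) = dm_y(x) d\<nu>(y), tested on Borel rectangles A x B *)
definition reversible_measure :: "('a::polish_space \<Rightarrow> 'a measure) \<Rightarrow> 'a measure \<Rightarrow> bool" where
  "reversible_measure m \<nu> \<longleftrightarrow>
     (\<forall>A \<in> sets borel. \<forall>B \<in> sets borel.
        (\<integral>\<^sup>+ x\<in>A. emeasure (m x) B \<partial>\<nu>) = (\<integral>\<^sup>+ y\<in>B. emeasure (m y) A \<partial>\<nu>))"

definition ergodic :: "('a::polish_space \<Rightarrow> 'a measure) \<Rightarrow> 'a measure \<Rightarrow> bool" where
  "ergodic m \<nu> \<longleftrightarrow>
     (\<forall>B \<in> sets borel. (\<forall>x\<in>B. emeasure (m x) B = 1) \<longrightarrow>
        emeasure \<nu> B = 0 \<or> emeasure \<nu> B = emeasure \<nu> UNIV)"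

definition curve_length :: "(real \<Rightarrow> 'a::metric_space) \<Rightarrow> ereal" where
  "curve_length g = (SUP p \<in> {(n, t). t 0 = 0 \<and> t n = 1 \<and> (\<forall>i<n. t i \<le> t (Suc i))}.
      ereal (\<Sum>i<fst p. dist (g (snd p i)) (g (snd p (Suc i)))))"

definition length_space :: "'a::metric_space itself \<Rightarrow> bool" where
  "length_space _ \<longleftrightarrow> (\<forall>x y::'a. ereal (dist x y) =
      (INF g \<in> {g. path g \<and> pathstart g = x \<and> pathfinish g = y}. curve_length g))"

definition doubling :: "'a::metric_space measure \<Rightarrow> bool" where
  "doubling \<nu> \<longleftrightarrow> (\<exists>C::real. \<forall>x r. r > 0 \<longrightarrow>
      0 < emeasure \<nu> (ball x (2*r)) \<and>
      emeasure \<nu> (ball x (2*r)) \<le> ennreal C * emeasure \<nu> (ball x r) \<and>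
      emeasure \<nu> (ball x r) < \<infinity>)"

definition m_boundary :: "('a \<Rightarrow> 'a measure) \<Rightarrow> 'a set \<Rightarrow> 'a set" where
  "m_boundary m \<Omega> = {x. x \<notin> \<Omega> \<and> emeasure (m x) \<Omega> > 0}"

definition poincare_ineq :: "('a::polish_space \<Rightarrow> 'a measure) \<Rightarrow> 'a measure \<Rightarrow> 'a set \<Rightarrow> real \<Rightarrow> bool" where
  "poincare_ineq m \<nu> \<Omega> q \<longleftrightarrow> (\<exists>lam>0. \<forall>u \<psi>.
     u \<in> borel_measurable borel \<longrightarrow> \<psi> \<in> borel_measurable borel \<longrightarrow>
     (\<integral>\<^sup>+ x\<in>\<Omega>. ennreal (\<bar>u x\<bar> powr q) \<partial>\<nu>) < \<infinity> \<longrightarrow>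
     (\<integral>\<^sup>+ y\<in>m_boundary m \<Omega>. ennreal (\<bar>\<psi> y\<bar> powr q) \<partial>\<nu>) < \<infinity> \<longrightarrow>
     ennreal lam * (\<integral>\<^sup>+ x\<in>\<Omega>. ennreal (\<bar>u x\<bar> powr q) \<partial>\<nu>) \<le>
       (\<integral>\<^sup>+ x\<in>\<Omega>. (\<integral>\<^sup>+ y\<in>\<Omega> \<union> m_boundary m \<Omega>.
            ennreal (\<bar>(if y \<in> \<Omega> then u y else \<psi> y) - u x\<bar> powr q) \<partial>(m x)) \<partial>\<nu>)
       + (\<integral>\<^sup>+ y\<in>m_boundary m \<Omega>. ennreal (\<bar>\<psi> y\<bar> powr q) \<partial>\<nu>))"

end

theory Submission
  imports Defs
begin

text \<open>
  Write \<open>K x\<close> for the annulus \<open>{y. \<delta> < d x y < \<epsilon>}\<close> (a ball when \<open>\<delta> < 0\<close>); the hypothesis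
  gives \<open>m\<^sub>x \<ge> \<beta> \<nu>\<lfloor>K x\<close> with \<open>\<beta> = \<alpha> / \<nu>(X)\<close>. Doubling makes closed balls compact, so in
  the length space any \<open>\<rho>\<close>-ball around a point of \<open>\<Omega>\<close> is joined, by a chain of steps whose
  \<open>\<rho>\<close>-balls fit into each other's annuli, to a \<open>\<rho>\<close>-ball carrying mass outside \<open>\<Omega>\<close>.
  Following a chain from a ball that is heavy inside a set \<open>S \<subseteq> \<Omega>\<close> to this ball, one finds a
  step from a ball heavy inside \<open>S\<close> to a ball heavy outside \<open>S\<close>: every \<open>S\<close> of measure at
  least \<open>c\<close> contains a set of measure at least \<open>\<theta>\<close> whose annuli carry mass at least \<open>\<theta>\<close>
  outside \<open>S\<close>.

  Starting from the \<open>m\<close>-boundary \<open>\<Gamma>\<close>, add repeatedly the points of \<open>\<Omega>\<close> whose annulus meets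
  the current layer in measure at least \<open>\<theta>\<close>. By symmetry of the annulus kernel almost every
  annulus centred in \<open>\<Omega>\<close> lies in \<open>\<Omega> \<union> \<Gamma>\<close> up to a null set, so the expansion property
  removes mass \<open>\<theta>\<close> from what is left of \<open>\<Omega>\<close> at every step and finitely many layers
  exhaust \<open>\<Omega>\<close>. On a new layer \<open>|u|\<^sup>p\<close> is at most \<open>2\<^sup>p/\<theta>\<close> times the \<open>\<nu>\<close>-energy of
  \<open>u\<^sub>\<psi>\<close> plus \<open>\<nu>(\<Omega>)\<close> times its integral over the previous layer, and the \<open>\<nu>\<close>-energy is at
  most \<open>1/\<beta>\<close> times the \<open>m\<close>-energy; iterating gives the inequality with a constant that is
  geometric in the number of layers.
\<close>

subsection \<open>Annuli and doubling measures\<close>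

definition annulus :: "'a::metric_space \<Rightarrow> real \<Rightarrow> real \<Rightarrow> 'a set" where
  "annulus x \<delta> \<epsilon> = {y. \<delta> < dist x y \<and> dist x y < \<epsilon>}"

lemma annulus_eq_ball_Diff_cball: "annulus x \<delta> \<epsilon> = ball x \<epsilon> - cball x \<delta>"
  by (auto simp: annulus_def)

lemma ball_eq_annulus: "\<delta> < 0 \<Longrightarrow> ball x \<epsilon> = annulus x \<delta> \<epsilon>"
  by (auto simp: annulus_def less_le_trans[OF _ zero_le_dist])

lemma annulus_sets_borel [simp, measurable]: "annulus x \<delta> \<epsilon> \<in> sets borel"
  by (simp add: annulus_eq_ball_Diff_cball borel_closed sets.Diff)

lemma mem_annulus_commute: "y \<in> annulus x \<delta> \<epsilon> \<longleftrightarrow> x \<in> annulus y \<delta> \<epsilon>"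
  by (simp add: annulus_def dist_commute)

lemma ball_subset_annulus:
  assumes "\<delta> + r \<le> dist x w" "dist x w + r \<le> \<epsilon>"
  shows "ball w r \<subseteq> annulus x \<delta> \<epsilon>"
proof
  fix z assume "z \<in> ball w r"
  then show "z \<in> annulus x \<delta> \<epsilon>"
    using assms dist_triangle[of x w z] dist_triangle[of x z w]
    by (auto simp: annulus_def dist_commute)
qed

lemma compact_uniform_annulus:
  fixes C :: "'a::metric_space set"
  assumes "compact C" "\<And>x. x \<in> C \<Longrightarrow> annulus x \<delta> \<epsilon> \<noteq> {}"
  obtains \<gamma> where "\<gamma> > 0" "\<And>x. x \<in> C \<Longrightarrow> annulus x (\<delta> + \<gamma>) (\<epsilon> - \<gamma>) \<noteq> {}"
proof -
  obtain w where w: "\<And>x. x \<in> C \<Longrightarrow> w x \<in> annulus x \<delta> \<epsilon>"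
    using bchoice[of C "\<lambda>x y. y \<in> annulus x \<delta> \<epsilon>"] assms(2) by blast
  define g where "g x = min (dist x (w x) - \<delta>) (\<epsilon> - dist x (w x)) / 2" for x
  have g_pos: "g x > 0" if "x \<in> C" for x
    using w[OF that] by (auto simp: g_def annulus_def)
  then have cover: "C \<subseteq> (\<Union>x\<in>C. ball x (g x))"
    by auto
  obtain F where F: "F \<subseteq> C" "finite F" "C \<subseteq> (\<Union>x\<in>F. ball x (g x))"
    using compactE_image[OF assms(1) _ cover] by blast
  define \<gamma> where "\<gamma> = Min (insert 1 (g ` F))"
  have "\<gamma> > 0"
    unfolding \<gamma>_def using F(1,2) g_pos by (subst Min_gr_iff) auto
  moreover have "annulus y (\<delta> + \<gamma>) (\<epsilon> - \<gamma>) \<noteq> {}" if "y \<in> C" for y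
  proof -
    obtain x where x: "x \<in> F" "dist x y < g x"
      using F(3) \<open>y \<in> C\<close> by auto
    have "\<gamma> \<le> g x"
      unfolding \<gamma>_def using F(2) x(1) by (intro Min_le) auto
    moreover have "g x \<le> (dist x (w x) - \<delta>) / 2" "g x \<le> (\<epsilon> - dist x (w x)) / 2"
      by (simp_all add: g_def)
    moreover have "dist x (w x) \<le> dist x y + dist y (w x)" "dist y (w x) \<le> dist x y + dist x (w x)"
      using dist_triangle[of x "w x" y] dist_triangle[of y "w x" x] by (simp_all add: dist_commute)
    ultimately have "w x \<in> annulus y (\<delta> + \<gamma>) (\<epsilon> - \<gamma>)"
      using x(2) unfolding annulus_def by simp
    then show ?thesis
      by blast
  qed
  ultimately show thesis
    using that by blast
qed

lemma emeasure_pos_imp_ball_Int_pos: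
  fixes \<nu> :: "'a::{metric_space, second_countable_topology} measure"
  assumes "sets \<nu> = sets borel" "A \<in> sets borel" "0 < emeasure \<nu> A" "r > 0"
  obtains b where "0 < emeasure \<nu> (ball b r \<inter> A)"
proof (rule ccontr)
  assume null_balls: "\<not> thesis"
  obtain D :: "'a set" where D: "countable D" "\<And>X. open X \<Longrightarrow> X \<noteq> {} \<Longrightarrow> \<exists>d\<in>D. d \<in> X"
    using countable_dense_setE by blast
  have "A \<subseteq> (\<Union>d\<in>D. ball d r \<inter> A)"
  proof
    fix z assume "z \<in> A"
    obtain d where "d \<in> D" "d \<in> ball z r"
      using D(2)[of "ball z r"] \<open>r > 0\<close> by auto
    then show "z \<in> (\<Union>d\<in>D. ball d r \<inter> A)"
      using \<open>z \<in> A\<close> by (auto simp: dist_commute)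
  qed
  moreover have "emeasure \<nu> (ball d r \<inter> A) = 0" for d
    using null_balls that[of d] by (metis gr_zeroI)
  then have "(\<Union>d\<in>D. ball d r \<inter> A) \<in> null_sets \<nu>"
    using assms(1,2) D(1) by (intro null_sets_UN') (auto simp: null_sets_def)
  ultimately have "A \<in> null_sets \<nu>"
    using assms(1,2) by (auto intro: null_sets_subset)
  then show False
    using assms(3) by (simp add: null_sets_def)
qed

lemma doublingE:
  assumes "doubling \<nu>"
  obtains C :: real where "C \<ge> 1"
    and "\<And>x r. r > 0 \<Longrightarrow> emeasure \<nu> (ball x (2 * r)) \<le> ennreal C * emeasure \<nu> (ball x r)"
    and "\<And>x r. r > 0 \<Longrightarrow> 0 < emeasure \<nu> (ball x r)"
    and "\<And>x r. r > 0 \<Longrightarrow> emeasure \<nu> (ball x r) < \<infinity>"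
proof -
  obtain C :: real where C: "\<And>x r. r > 0 \<Longrightarrow> 0 < emeasure \<nu> (ball x (2 * r)) \<and>
      emeasure \<nu> (ball x (2 * r)) \<le> ennreal C * emeasure \<nu> (ball x r) \<and> emeasure \<nu> (ball x r) < \<infinity>"
    using assms unfolding doubling_def by blast
  have "emeasure \<nu> (ball x (2 * r)) \<le> ennreal (max C 1) * emeasure \<nu> (ball x r)" if "r > 0" for x r
  proof -
    have "emeasure \<nu> (ball x (2 * r)) \<le> ennreal C * emeasure \<nu> (ball x r)"
      using C[OF that] by blast
    also have "\<dots> \<le> ennreal (max C 1) * emeasure \<nu> (ball x r)"
      by (intro mult_right_mono ennreal_leI) auto
    finally show ?thesis .
  qed
  moreover have "0 < emeasure \<nu> (ball x r)" if "r > 0" for x r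
    using C[of "r / 2" x] that by simp
  ultimately show thesis
    using that[of "max C 1"] C by simp
qed

lemma doubling_uniform_lower_bound:
  fixes \<nu> :: "'a::metric_space measure"
  assumes "doubling \<nu>" "sets \<nu> = sets borel" "bounded W" "\<rho> > 0"
  obtains c where "c > 0" "\<And>w. w \<in> W \<Longrightarrow> ennreal c \<le> emeasure \<nu> (ball w \<rho>)"
proof -
  obtain C where C: "C \<ge> 1"
    "\<And>x r. r > 0 \<Longrightarrow> emeasure \<nu> (ball x (2 * r)) \<le> ennreal C * emeasure \<nu> (ball x r)"
    "\<And>x r. r > 0 \<Longrightarrow> 0 < emeasure \<nu> (ball x r)" "\<And>x r. r > 0 \<Longrightarrow> emeasure \<nu> (ball x r) < \<infinity>"
    using doublingE[OF assms(1)] by blast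
  have iterate: "emeasure \<nu> (ball x (2 ^ k * \<rho>)) \<le> ennreal (C ^ k) * emeasure \<nu> (ball x \<rho>)" for k x
  proof (induction k)
    case (Suc k)
    have "emeasure \<nu> (ball x (2 ^ Suc k * \<rho>)) \<le> ennreal C * emeasure \<nu> (ball x (2 ^ k * \<rho>))"
      using C(2)[of "2 ^ k * \<rho>" x] \<open>\<rho> > 0\<close> by (simp add: mult.assoc)
    also have "\<dots> \<le> ennreal C * (ennreal (C ^ k) * emeasure \<nu> (ball x \<rho>))"
      by (intro mult_left_mono Suc.IH) auto
    finally show ?case
      using C(1) by (simp add: ennreal_mult' mult.assoc)
  qed simp
  obtain x0 :: 'a where True by blast
  obtain R where R: "R > 0" "W \<subseteq> ball x0 R"
    using bounded_subset_ballD[OF assms(3)] by blast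
  obtain k where k: "2 * R / \<rho> < 2 ^ k"
    using real_arch_pow[of "2::real" "2 * R / \<rho>"] by auto
  define c where "c = enn2real (emeasure \<nu> (ball x0 R)) / C ^ k"
  have ball_x0: "ennreal (enn2real (emeasure \<nu> (ball x0 R))) = emeasure \<nu> (ball x0 R)"
    using C(4)[OF R(1), of x0] by (simp add: ennreal_enn2real_if less_top)
  have "c > 0"
    unfolding c_def using C(1) C(3)[OF R(1)] C(4)[OF R(1)]
    by (intro divide_pos_pos) (auto simp: enn2real_positive_iff)
  moreover have "ennreal c \<le> emeasure \<nu> (ball w \<rho>)" if "w \<in> W" for w
  proof -
    have "ball x0 R \<subseteq> ball w (2 ^ k * \<rho>)"
    proof
      fix z assume "z \<in> ball x0 R"
      moreover have "dist x0 w < R"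
        using that R(2) by auto
      moreover have "2 * R < 2 ^ k * \<rho>"
        using k \<open>\<rho> > 0\<close> by (simp add: field_simps)
      ultimately show "z \<in> ball w (2 ^ k * \<rho>)"
        using dist_triangle[of w z x0] by (simp add: dist_commute)
    qed
    then have "emeasure \<nu> (ball x0 R) \<le> emeasure \<nu> (ball w (2 ^ k * \<rho>))"
      by (rule emeasure_mono) (simp add: assms(2))
    also have "\<dots> \<le> ennreal (C ^ k) * emeasure \<nu> (ball w \<rho>)"
      by (rule iterate)
    finally have "emeasure \<nu> (ball x0 R) \<le> ennreal (C ^ k) * emeasure \<nu> (ball w \<rho>)" .
    then have "ennreal (C ^ k) * ennreal c \<le> ennreal (C ^ k) * emeasure \<nu> (ball w \<rho>)"
      using C(1) ball_x0 by (simp add: c_def ennreal_mult'[symmetric])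
    then show ?thesis
      using C(1) by (subst (asm) ennreal_mult_le_mult_iff) auto
  qed
  ultimately show thesis
    using that by blast
qed

lemma separated_subset_of_no_finite_net:
  fixes W :: "'a::metric_space set"
  assumes "\<And>F. finite F \<Longrightarrow> F \<subseteq> W \<Longrightarrow> \<not> W \<subseteq> (\<Union>x\<in>F. ball x e)" "e > 0"
  shows "\<exists>F\<subseteq>W. finite F \<and> card F = n \<and> (\<forall>x\<in>F. \<forall>y\<in>F. x \<noteq> y \<longrightarrow> e \<le> dist x y)"
proof (induction n)
  case 0
  show ?case
    by (intro exI[of _ "{}"]) auto
next
  case (Suc n)
  then obtain F where F: "F \<subseteq> W" "finite F" "card F = n" "\<forall>x\<in>F. \<forall>y\<in>F. x \<noteq> y \<longrightarrow> e \<le> dist x y"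
    by blast
  from assms(1)[OF F(2,1)] obtain y where "y \<in> W" "y \<notin> (\<Union>x\<in>F. ball x e)"
    by blast
  then have y: "y \<in> W" "\<And>x. x \<in> F \<Longrightarrow> e \<le> dist x y"
    by (auto simp: not_less)
  have "y \<notin> F"
    using y(2)[of y] \<open>e > 0\<close> by auto
  then show ?case
    using F y by (intro exI[of _ "insert y F"]) (auto simp: dist_commute)
qed

lemma doubling_finite_net:
  fixes \<nu> :: "'a::metric_space measure" and W :: "'a set"
  assumes "doubling \<nu>" "sets \<nu> = sets borel" "emeasure \<nu> UNIV < \<infinity>" "bounded W" "e > 0"
  obtains F where "finite F" "F \<subseteq> W" "W \<subseteq> (\<Union>x\<in>F. ball x e)"
proof (rule ccontr)
  note net = that
  assume no_net: "\<not> thesis"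
  have no_cover: "\<not> W \<subseteq> (\<Union>x\<in>F. ball x e)" if "finite F" "F \<subseteq> W" for F
    using no_net net[OF that] by blast
  have "e / 2 > 0"
    using \<open>e > 0\<close> by simp
  then obtain c where c: "c > 0" "\<And>w. w \<in> W \<Longrightarrow> ennreal c \<le> emeasure \<nu> (ball w (e / 2))"
    using doubling_uniform_lower_bound[OF assms(1,2,4)] by blast
  define T where "T = enn2real (emeasure \<nu> UNIV)"
  have T: "emeasure \<nu> UNIV = ennreal T"
    using assms(3) by (simp add: T_def ennreal_enn2real_if)
  obtain n :: nat where n: "T / c < n"
    using reals_Archimedean2 by blast
  obtain F where F: "F \<subseteq> W" "finite F" "card F = n" "\<forall>x\<in>F. \<forall>y\<in>F. x \<noteq> y \<longrightarrow> e \<le> dist x y"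
    using separated_subset_of_no_finite_net[OF no_cover \<open>e > 0\<close>, of n] by blast
  have disjoint: "disjoint_family_on (\<lambda>x. ball x (e / 2)) F"
    unfolding disjoint_family_on_def
  proof (intro ballI impI)
    fix x y assume "x \<in> F" "y \<in> F" "x \<noteq> y"
    then have "e \<le> dist x y"
      using F(4) by blast
    show "ball x (e / 2) \<inter> ball y (e / 2) = {}"
    proof (rule ccontr)
      assume "ball x (e / 2) \<inter> ball y (e / 2) \<noteq> {}"
      then obtain z where "dist x z < e / 2" "dist y z < e / 2"
        by auto
      then show False
        using \<open>e \<le> dist x y\<close> dist_triangle[of x y z] by (simp add: dist_commute)
    qed
  qed
  have balls: "(\<lambda>x. ball x (e / 2)) ` F \<subseteq> sets \<nu>"
    using assms(2) by (simp add: image_subset_iff borel_open)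
  have mass: "ennreal (real n * c) \<le> emeasure \<nu> UNIV"
  proof -
    have "ennreal (real n * c) = (\<Sum>x\<in>F. ennreal c)"
      using F(3) c(1) by (simp add: ennreal_mult' ennreal_of_nat_eq_real_of_nat)
    also have "\<dots> \<le> (\<Sum>x\<in>F. emeasure \<nu> (ball x (e / 2)))"
      using c(2) F(1) by (intro sum_mono) auto
    also have "\<dots> = emeasure \<nu> (\<Union>x\<in>F. ball x (e / 2))"
      using balls disjoint F(2) by (rule sum_emeasure)
    also have "\<dots> \<le> emeasure \<nu> UNIV"
      using assms(2) by (intro emeasure_mono) auto
    finally show ?thesis .
  qed
  have "0 \<le> T"
    by (simp add: T_def)
  then have "real n * c \<le> T"
    using mass unfolding T by (simp add: ennreal_le_iff)
  moreover have "T < real n * c"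
    using n c(1) by (simp add: divide_less_eq)
  ultimately show False
    by linarith
qed

lemma doubling_compact_cball:
  fixes \<nu> :: "'a::{metric_space, complete_space} measure" and x :: 'a
  assumes "doubling \<nu>" "sets \<nu> = sets borel" "emeasure \<nu> UNIV < \<infinity>"
  shows "compact (cball x r)"
  unfolding compact_eq_totally_bounded
proof
  show "complete (cball x r)"
    by (simp add: complete_eq_closed)
  show "\<forall>e>0. \<exists>k. finite k \<and> cball x r \<subseteq> (\<Union>x\<in>k. ball x e)"
  proof (intro allI impI)
    fix e :: real
    assume "e > 0"
    obtain k where "finite k" "k \<subseteq> cball x r" "cball x r \<subseteq> (\<Union>x\<in>k. ball x e)"
      using doubling_finite_net[OF assms bounded_cball[of x r] \<open>e > 0\<close>] .
    then show "\<exists>k. finite k \<and> cball x r \<subseteq> (\<Union>x\<in>k. ball x e)"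
      by blast
  qed
qed

subsection \<open>Chains of annuli in length spaces\<close>

lemma dist_endpoints_le_curve_length:
  assumes "t \<in> {0..1}"
  shows "ereal (dist (g 0) (g t) + dist (g t) (g 1)) \<le> curve_length g"
proof -
  define ts where "ts i = (if i = 0 then 0 else if i = 1 then t else 1 :: real)" for i :: nat
  have "(2, ts) \<in> {(n, t). t 0 = 0 \<and> t n = 1 \<and> (\<forall>i<n. t i \<le> t (Suc i))}"
    using assms by (auto simp: ts_def less_2_cases_iff)
  then have "ereal (\<Sum>i<fst (2::nat, ts). dist (g (snd (2::nat, ts) i)) (g (snd (2::nat, ts) (Suc i))))
      \<le> curve_length g"
    unfolding curve_length_def by (rule SUP_upper)
  then show ?thesis
    by (simp add: ts_def numeral_2_eq_2)
qed

lemma length_space_short_path: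
  fixes a b :: "'a::metric_space"
  assumes "length_space TYPE('a)"
  obtains g where "path g" "pathstart g = a" "pathfinish g = b"
    "\<And>t. t \<in> {0..1} \<Longrightarrow> dist a (g t) \<le> dist a b + 1"
proof -
  have eq: "ereal (dist a b) = (INF g \<in> {g. path g \<and> pathstart g = a \<and> pathfinish g = b}. curve_length g)"
    using assms unfolding length_space_def by blast
  have "ereal (dist a b) < ereal (dist a b + 1)"
    by simp
  then have "(INF g \<in> {g. path g \<and> pathstart g = a \<and> pathfinish g = b}. curve_length g) < ereal (dist a b + 1)"
    unfolding eq .
  then obtain g where g: "path g" "pathstart g = a" "pathfinish g = b" "curve_length g < ereal (dist a b + 1)"
    unfolding INF_less_iff by blast
  have "dist a (g t) \<le> dist a b + 1" if "t \<in> {0..1}" for t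
  proof -
    have "ereal (dist (g 0) (g t) + dist (g t) (g 1)) < ereal (dist a b + 1)"
      using dist_endpoints_le_curve_length[OF that, of g] g(4) by (rule le_less_trans)
    then have "dist a (g t) + dist (g t) b < dist a b + 1"
      using g(2,3) by (simp add: pathstart_def pathfinish_def)
    then show ?thesis
      using zero_le_dist[of "g t" b] by linarith
  qed
  then show thesis
    using that g(1-3) by blast
qed

lemma path_fine_partition:
  fixes g :: "real \<Rightarrow> 'a::metric_space"
  assumes "path g" "\<rho> > 0"
  obtains n :: nat where "n > 0" "\<And>i. i < n \<Longrightarrow> dist (g (i / n)) (g (Suc i / n)) < \<rho>"
proof -
  have "uniformly_continuous_on {0..1} g"
    using assms(1) unfolding path_def by (intro compact_uniformly_continuous) auto
  then obtain d where d: "d > 0" "\<forall>s\<in>{0..1}. \<forall>t\<in>{0..1}. dist t s < d \<longrightarrow> dist (g t) (g s) < \<rho>"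
    unfolding uniformly_continuous_on_def using assms(2) by blast
  obtain n where n: "inverse (real (Suc n)) < d"
    using reals_Archimedean d(1) by blast
  have "dist (g (i / Suc n)) (g (Suc i / Suc n)) < \<rho>" if "i < Suc n" for i
  proof (rule d(2)[rule_format])
    show "i / Suc n \<in> {0..1}" "Suc i / Suc n \<in> {0..1}"
      using that by (auto simp: field_simps)
    have "dist (real (Suc i) / Suc n) (real i / Suc n) = inverse (real (Suc n))"
      by (simp add: dist_real_def field_simps)
    then show "dist (i / Suc n) (Suc i / Suc n) < d"
      using n by (simp add: dist_commute)
  qed
  then show thesis
    using that[of "Suc n"] by simp
qed

lemma length_space_chain:
  fixes a b :: "'a::metric_space"
  assumes "length_space TYPE('a)" "\<rho> > 0"
  obtains n and p :: "nat \<Rightarrow> 'a" where "n > 0" "p 0 = a" "p n = b"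
    "\<And>i. i < n \<Longrightarrow> dist (p i) (p (Suc i)) < \<rho>" "\<And>i. i \<le> n \<Longrightarrow> dist a (p i) \<le> dist a b + 1"
proof -
  obtain g where g: "path g" "pathstart g = a" "pathfinish g = b"
    "\<And>t. t \<in> {0..1} \<Longrightarrow> dist a (g t) \<le> dist a b + 1"
    using length_space_short_path[OF assms(1), of a b] by blast
  obtain n :: nat where n: "n > 0" "\<And>i. i < n \<Longrightarrow> dist (g (i / n)) (g (Suc i / n)) < \<rho>"
    using path_fine_partition[OF g(1) assms(2)] by blast
  define p where "p i = g (real i / real n)" for i
  have "p 0 = a" "p n = b"
    using g(2,3) n(1) by (simp_all add: p_def pathstart_def pathfinish_def)
  moreover have "dist (p i) (p (Suc i)) < \<rho>" if "i < n" for i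
    using n(2)[OF that] by (simp add: p_def)
  moreover have "dist a (p i) \<le> dist a b + 1" if "i \<le> n" for i
    using that n(1) unfolding p_def by (intro g(4)) (auto simp: field_simps)
  ultimately show thesis
    using that[of n p] n(1) by blast
qed

lemma tranclp_chain:
  assumes "n > 0" "\<And>i. i < n \<Longrightarrow> R\<^sup>+\<^sup>+ (p i) (p (Suc i))"
  shows "R\<^sup>+\<^sup>+ (p 0) (p n)"
  using assms
proof (induction n)
  case (Suc n)
  show ?case
  proof (cases "n = 0")
    case True
    then show ?thesis
      using Suc.prems(2)[of 0] by simp
  next
    case False
    then have "R\<^sup>+\<^sup>+ (p 0) (p n)"
      using Suc.prems(2) by (intro Suc.IH) auto
    moreover have "R\<^sup>+\<^sup>+ (p n) (p (Suc n))"
      using Suc.prems(2) by simp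
    ultimately show ?thesis
      by (rule tranclp_trans)
  qed
qed simp

lemma tranclp_crossing:
  assumes "R\<^sup>+\<^sup>+ a z" "P a" "Q z" "\<And>y. R\<^sup>+\<^sup>+ a y \<Longrightarrow> P y \<or> Q y"
  shows "\<exists>x y. R x y \<and> P x \<and> Q y"
  using assms(1,3)
proof (induction rule: tranclp_induct)
  case (base y)
  then show ?case
    using assms(2) by blast
next
  case (step y z)
  show ?case
  proof (cases "Q y")
    case True
    then show ?thesis
      using step.IH by blast
  next
    case False
    then show ?thesis
      using assms(4)[OF step.hyps(1)] step.hyps(2) step.prems by blast
  qed
qed

definition annulus_step :: "'a::metric_space set \<Rightarrow> real \<Rightarrow> real \<Rightarrow> real \<Rightarrow> 'a \<Rightarrow> 'a \<Rightarrow> bool" where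
  "annulus_step W \<delta> \<epsilon> \<rho> x y \<longleftrightarrow>
     x \<in> W \<and> y \<in> W \<and> \<delta> + 2 * \<rho> < dist x y \<and> dist x y < \<epsilon> - 2 * \<rho>"

lemma annulus_step_ball_subset:
  assumes "annulus_step W \<delta> \<epsilon> \<rho> x x'" "y \<in> ball x \<rho>"
  shows "ball x' \<rho> \<subseteq> annulus y \<delta> \<epsilon>"
proof (rule ball_subset_annulus)
  have "dist x x' \<le> dist x y + dist y x'" "dist y x' \<le> dist x y + dist x x'"
    using dist_triangle[of x x' y] dist_triangle[of y x' x] by (simp_all add: dist_commute)
  moreover have "dist x y < \<rho>"
    using assms(2) by simp
  moreover have "\<delta> + 2 * \<rho> < dist x x'" "dist x x' < \<epsilon> - 2 * \<rho>"
    using assms(1) by (simp_all add: annulus_step_def)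
  ultimately show "\<delta> + \<rho> \<le> dist y x'" "dist y x' + \<rho> \<le> \<epsilon>"
    by linarith+
qed

lemma annulus_gap_steps:
  assumes "w \<in> annulus x (\<delta> + \<gamma>) (\<epsilon> - \<gamma>)" "3 * \<rho> \<le> \<gamma>" "\<rho> > 0" "x \<in> W" "w \<in> W"
  shows "ball w \<rho> \<subseteq> annulus x \<delta> \<epsilon>"
    and "z \<in> W \<Longrightarrow> dist x z < \<rho> \<Longrightarrow> (annulus_step W \<delta> \<epsilon> \<rho>)\<^sup>+\<^sup>+ x z"
proof -
  show "ball w \<rho> \<subseteq> annulus x \<delta> \<epsilon>"
    using assms(1-3) by (intro ball_subset_annulus) (auto simp: annulus_def)
  assume z: "z \<in> W" "dist x z < \<rho>"
  have "dist x w \<le> dist x z + dist w z" "dist w z \<le> dist x w + dist x z"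
    using dist_triangle[of x w z] dist_triangle[of w z x] by (simp_all add: dist_commute)
  then have "annulus_step W \<delta> \<epsilon> \<rho> x w" "annulus_step W \<delta> \<epsilon> \<rho> w z"
    using assms z by (auto simp: annulus_step_def annulus_def)
  then show "(annulus_step W \<delta> \<epsilon> \<rho>)\<^sup>+\<^sup>+ x z"
    by (meson tranclp.r_into_trancl tranclp.trancl_into_trancl)
qed

lemma annulus_steps_of_uniform_gap:
  assumes "3 * \<rho> \<le> \<gamma>" "\<rho> > 0" "C \<subseteq> W"
    and "\<And>x. x \<in> C \<Longrightarrow> annulus x (\<delta> + \<gamma>) (\<epsilon> - \<gamma>) \<noteq> {}"
    and "\<And>x. x \<in> C \<Longrightarrow> annulus x (\<delta> + \<gamma>) (\<epsilon> - \<gamma>) \<subseteq> W"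
  shows "\<And>x z. x \<in> C \<Longrightarrow> z \<in> C \<Longrightarrow> dist x z < \<rho> \<Longrightarrow> (annulus_step W \<delta> \<epsilon> \<rho>)\<^sup>+\<^sup>+ x z"
    and "\<And>y. y \<in> C \<Longrightarrow> \<exists>w\<in>W. ball w \<rho> \<subseteq> annulus y \<delta> \<epsilon>"
proof -
  show "(annulus_step W \<delta> \<epsilon> \<rho>)\<^sup>+\<^sup>+ x z" if xz: "x \<in> C" "z \<in> C" "dist x z < \<rho>" for x z
  proof -
    obtain w where w: "w \<in> annulus x (\<delta> + \<gamma>) (\<epsilon> - \<gamma>)"
      using assms(4)[OF xz(1)] by blast
    have "x \<in> W" "w \<in> W" "z \<in> W"
      using w xz(1,2) assms(3,5) by auto
    then show ?thesis
      by (rule annulus_gap_steps(2)[OF w assms(1,2) _ _ _ xz(3)])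
  qed
  show "\<exists>w\<in>W. ball w \<rho> \<subseteq> annulus y \<delta> \<epsilon>" if y: "y \<in> C" for y
  proof -
    obtain w where w: "w \<in> annulus y (\<delta> + \<gamma>) (\<epsilon> - \<gamma>)"
      using assms(4)[OF y] by blast
    have "y \<in> W" "w \<in> W"
      using w y assms(3,5) by auto
    then show ?thesis
      using annulus_gap_steps(1)[OF w assms(1,2)] by blast
  qed
qed

lemma length_space_annulus_chains:
  fixes V :: "'a::metric_space set"
  assumes "length_space TYPE('a)" "\<And>(x::'a) r. compact (cball x r)" "bounded V"
    "\<And>x::'a. annulus x \<delta> \<epsilon> \<noteq> {}"
  obtains \<rho> W where "0 < \<rho>" "\<rho> \<le> 1" "bounded W"
    "\<And>a b. a \<in> V \<Longrightarrow> b \<in> V \<Longrightarrow> (annulus_step W \<delta> \<epsilon> \<rho>)\<^sup>+\<^sup>+ a b"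
    "\<And>y. y \<in> V \<Longrightarrow> \<exists>w\<in>W. ball w \<rho> \<subseteq> annulus y \<delta> \<epsilon>"
proof -
  obtain x0 :: 'a where True by blast
  obtain R where R: "R > 0" "V \<subseteq> ball x0 R"
    using bounded_subset_ballD[OF assms(3)] by blast
  define C where "C = cball x0 (3 * R + 1)"
  have "compact C"
    by (simp add: C_def assms(2))
  moreover have "\<And>x. x \<in> C \<Longrightarrow> annulus x \<delta> \<epsilon> \<noteq> {}"
    using assms(4) by blast
  ultimately obtain \<gamma> where \<gamma>: "\<gamma> > 0" "\<And>x. x \<in> C \<Longrightarrow> annulus x (\<delta> + \<gamma>) (\<epsilon> - \<gamma>) \<noteq> {}"
    using compact_uniform_annulus by blast
  define \<rho> where "\<rho> = min (\<gamma> / 3) 1"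
  define W where "W = cball x0 (3 * R + 1 + \<epsilon>)"
  have \<rho>: "0 < \<rho>" "\<rho> \<le> 1" "3 * \<rho> \<le> \<gamma>"
    using \<gamma>(1) by (auto simp: \<rho>_def)
  have "\<epsilon> > 0"
    using assms(4)[of x0] by (auto simp: annulus_def le_less_trans[OF zero_le_dist])
  then have "C \<subseteq> W"
    by (auto simp: C_def W_def)
  have "annulus x (\<delta> + \<gamma>) (\<epsilon> - \<gamma>) \<subseteq> W" if x: "x \<in> C" for x
  proof
    fix w assume "w \<in> annulus x (\<delta> + \<gamma>) (\<epsilon> - \<gamma>)"
    then have "dist x0 w \<le> 3 * R + 1 + \<epsilon>"
      using x dist_triangle[of x0 w x] \<gamma>(1) by (auto simp: C_def annulus_def)
    then show "w \<in> W"
      by (simp add: W_def)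
  qed
  note steps = annulus_steps_of_uniform_gap[OF \<rho>(3,1) \<open>C \<subseteq> W\<close> \<gamma>(2) this]
  have chains: "(annulus_step W \<delta> \<epsilon> \<rho>)\<^sup>+\<^sup>+ a b" if "a \<in> V" "b \<in> V" for a b
  proof -
    obtain n p where p: "n > 0" "p 0 = a" "p n = b" "\<And>i. i < n \<Longrightarrow> dist (p i) (p (Suc i)) < \<rho>"
      "\<And>i. i \<le> n \<Longrightarrow> dist a (p i) \<le> dist a b + 1"
      using length_space_chain[OF assms(1) \<rho>(1)] by blast
    have "dist x0 a < R" "dist x0 b < R"
      using R(2) that by auto
    then have p_in_C: "p i \<in> C" if "i \<le> n" for i
      using p(5)[OF that] dist_triangle[of x0 "p i" a] dist_triangle[of a b x0] dist_commute[of a x0]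
      unfolding C_def mem_cball by linarith
    have "(annulus_step W \<delta> \<epsilon> \<rho>)\<^sup>+\<^sup>+ (p 0) (p n)"
    proof (rule tranclp_chain[OF p(1)])
      show "(annulus_step W \<delta> \<epsilon> \<rho>)\<^sup>+\<^sup>+ (p i) (p (Suc i))" if "i < n" for i
        using that by (intro steps(1) p_in_C p(4)) auto
    qed
    then show ?thesis
      using p(2,3) by simp
  qed
  have inner: "\<exists>w\<in>W. ball w \<rho> \<subseteq> annulus y \<delta> \<epsilon>" if "y \<in> V" for y
    using that R by (intro steps(2)) (auto simp: C_def)
  have "bounded W"
    by (simp add: W_def)
  from that[OF \<rho>(1,2) this chains inner] show thesis .
qed

subsection \<open>Expansion\<close>

lemma annulus_chain_escape:
  fixes \<nu> :: "'a::metric_space measure"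
  assumes "finite_measure \<nu>" "sets \<nu> = sets borel" "S \<in> sets borel"
    and "(annulus_step W \<delta> \<epsilon> \<rho>)\<^sup>+\<^sup>+ a b"
    and "\<And>w. w \<in> W \<Longrightarrow> 2 * \<theta> \<le> measure \<nu> (ball w \<rho>)"
    and "\<theta> \<le> measure \<nu> (ball a \<rho> \<inter> S)" "\<theta> \<le> measure \<nu> (ball b \<rho> - S)"
  obtains x where "\<theta> \<le> measure \<nu> (ball x \<rho> \<inter> S)"
    "\<And>y. y \<in> ball x \<rho> \<inter> S \<Longrightarrow> \<theta> \<le> measure \<nu> (annulus y \<delta> \<epsilon> - S)"
proof -
  interpret finite_measure \<nu>
    by fact
  have "\<theta> \<le> measure \<nu> (ball y \<rho> \<inter> S) \<or> \<theta> \<le> measure \<nu> (ball y \<rho> - S)"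
    if "(annulus_step W \<delta> \<epsilon> \<rho>)\<^sup>+\<^sup>+ a y" for y
  proof -
    have "y \<in> W"
      using that by (induction rule: tranclp_induct) (auto simp: annulus_step_def)
    then have "2 * \<theta> \<le> measure \<nu> (ball y \<rho> \<inter> S) + measure \<nu> (ball y \<rho> - S)"
      using assms(5) finite_measure_Diff'[of "ball y \<rho>" S] assms(2,3) by (simp add: borel_open)
    then show ?thesis
      by linarith
  qed
  then obtain x x' where x: "annulus_step W \<delta> \<epsilon> \<rho> x x'" "\<theta> \<le> measure \<nu> (ball x \<rho> \<inter> S)"
    "\<theta> \<le> measure \<nu> (ball x' \<rho> - S)"
    using tranclp_crossing[where P = "\<lambda>x. \<theta> \<le> measure \<nu> (ball x \<rho> \<inter> S)"
        and Q = "\<lambda>x. \<theta> \<le> measure \<nu> (ball x \<rho> - S)", OF assms(4,6,7)]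
    by blast
  have "\<theta> \<le> measure \<nu> (annulus y \<delta> \<epsilon> - S)" if "y \<in> ball x \<rho> \<inter> S" for y
  proof -
    have "ball x' \<rho> - S \<subseteq> annulus y \<delta> \<epsilon> - S"
      using annulus_step_ball_subset[OF x(1)] that by blast
    then have "measure \<nu> (ball x' \<rho> - S) \<le> measure \<nu> (annulus y \<delta> \<epsilon> - S)"
      using assms(2,3) by (intro finite_measure_mono) auto
    then show ?thesis
      using x(3) by linarith
  qed
  then show thesis
    using that x(2) by blast
qed

lemma finite_cover_heavy_piece:
  assumes "finite_measure \<nu>" "finite F" "F \<noteq> {}" "S \<subseteq> (\<Union>a\<in>F. U a)"
    "\<And>a. a \<in> F \<Longrightarrow> U a \<inter> S \<in> sets \<nu>"
  obtains a where "a \<in> F" "measure \<nu> S / card F \<le> measure \<nu> (U a \<inter> S)"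
proof (rule ccontr)
  interpret finite_measure \<nu>
    by fact
  assume "\<not> thesis"
  from that this have small: "\<And>a. a \<in> F \<Longrightarrow> measure \<nu> (U a \<inter> S) < measure \<nu> S / card F"
    by (meson not_le)
  have "(\<Union>a\<in>F. U a \<inter> S) \<in> sets \<nu>"
    using assms(2,5) by (intro sets.finite_UN) auto
  then have "measure \<nu> S \<le> measure \<nu> (\<Union>a\<in>F. U a \<inter> S)"
    using assms(4) by (intro finite_measure_mono) auto
  also have "\<dots> \<le> (\<Sum>a\<in>F. measure \<nu> (U a \<inter> S))"
    using assms(2,5) by (intro finite_measure_subadditive_finite) auto
  also have "\<dots> < (\<Sum>a\<in>F. measure \<nu> S / card F)"
    using assms(2,3) small by (intro sum_strict_mono) auto
  also have "\<dots> = measure \<nu> S"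
    using assms(2,3) by simp
  finally show False
    by simp
qed

definition annulus_expansion :: "'a::metric_space measure \<Rightarrow> 'a set \<Rightarrow> real \<Rightarrow> real \<Rightarrow> real \<Rightarrow> real \<Rightarrow> bool" where
  "annulus_expansion \<nu> \<Omega> \<delta> \<epsilon> c \<theta> \<longleftrightarrow>
     (\<forall>S\<in>sets borel. S \<subseteq> \<Omega> \<longrightarrow> c \<le> measure \<nu> S \<longrightarrow>
        (\<exists>Y\<in>sets borel. Y \<subseteq> S \<and> \<theta> \<le> measure \<nu> Y \<and> (\<forall>y\<in>Y. \<theta> \<le> measure \<nu> (annulus y \<delta> \<epsilon> - S))))"

lemma annulus_expansion_from_chains:
  fixes \<nu> :: "'a::metric_space measure"
  assumes "finite_measure \<nu>" "sets \<nu> = sets borel"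
    and "finite F" "F \<noteq> {}" "\<Omega> \<subseteq> (\<Union>a\<in>F. ball a \<rho>)"
    and "\<And>a. a \<in> F \<Longrightarrow> (annulus_step W \<delta> \<epsilon> \<rho>)\<^sup>+\<^sup>+ a b"
    and "\<And>w. w \<in> W \<Longrightarrow> 2 * c \<le> measure \<nu> (ball w \<rho>)"
    and "0 \<le> c" "\<theta> \<le> c / card F" "\<theta> \<le> measure \<nu> (ball b \<rho> - \<Omega>)"
  shows "annulus_expansion \<nu> \<Omega> \<delta> \<epsilon> c \<theta>"
  unfolding annulus_expansion_def
proof (intro ballI impI)
  interpret finite_measure \<nu>
    by fact
  fix S assume S: "S \<in> sets borel" "S \<subseteq> \<Omega>" "c \<le> measure \<nu> S"
  have "S \<subseteq> (\<Union>a\<in>F. ball a \<rho>)"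
    using S(2) assms(5) by blast
  moreover have "ball a \<rho> \<inter> S \<in> sets \<nu>" for a
    using S(1) assms(2) by (metis borel_open open_ball sets.Int)
  ultimately obtain a where a: "a \<in> F" "measure \<nu> S / card F \<le> measure \<nu> (ball a \<rho> \<inter> S)"
    using finite_cover_heavy_piece[OF assms(1,3,4)] by blast
  have "c / card F \<le> measure \<nu> S / card F"
    using S(3) by (simp add: divide_right_mono)
  then have "\<theta> \<le> measure \<nu> (ball a \<rho> \<inter> S)"
    using a(2) assms(9) by linarith
  have "measure \<nu> (ball b \<rho> - \<Omega>) \<le> measure \<nu> (ball b \<rho> - S)"
    using S(1,2) assms(2) by (intro finite_measure_mono) (auto simp: borel_open)
  then have "\<theta> \<le> measure \<nu> (ball b \<rho> - S)"
    using assms(10) by linarith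
  have "c / card F \<le> c / 1"
    using assms(3,4,8) by (intro divide_left_mono) (auto simp: Suc_leI card_gt_0_iff)
  then have "2 * \<theta> \<le> measure \<nu> (ball w \<rho>)" if "w \<in> W" for w
    using assms(7)[OF that] assms(9) by linarith
  then obtain x where x: "\<theta> \<le> measure \<nu> (ball x \<rho> \<inter> S)"
    "\<And>y. y \<in> ball x \<rho> \<inter> S \<Longrightarrow> \<theta> \<le> measure \<nu> (annulus y \<delta> \<epsilon> - S)"
    using annulus_chain_escape[OF assms(1,2) S(1) assms(6)[OF a(1)]]
      \<open>\<theta> \<le> measure \<nu> (ball a \<rho> \<inter> S)\<close> \<open>\<theta> \<le> measure \<nu> (ball b \<rho> - S)\<close> by blast
  then show "\<exists>Y\<in>sets borel. Y \<subseteq> S \<and> \<theta> \<le> measure \<nu> Y \<and> (\<forall>y\<in>Y. \<theta> \<le> measure \<nu> (annulus y \<delta> \<epsilon> - S))"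
    using S(1) by (intro bexI[of _ "ball x \<rho> \<inter> S"]) (auto simp: borel_open)
qed

lemma complement_mass_near:
  fixes \<nu> :: "'a::{metric_space, second_countable_topology} measure"
  assumes "finite_measure \<nu>" "sets \<nu> = sets borel" "\<Omega> \<in> sets borel"
    "emeasure \<nu> \<Omega> < emeasure \<nu> UNIV"
  obtains b0 where "\<And>\<rho>. 0 < \<rho> \<Longrightarrow> \<rho> \<le> 1 \<Longrightarrow> \<exists>b\<in>ball b0 2. 0 < measure \<nu> (ball b \<rho> - \<Omega>)"
proof -
  interpret finite_measure \<nu>
    by fact
  note assms(3)[measurable]
  have space: "space \<nu> = UNIV"
    using sets_eq_imp_space_eq[OF assms(2)] by simp
  have "measure \<nu> \<Omega> < measure \<nu> UNIV"
    using assms(4) by (simp add: emeasure_eq_measure ennreal_less_iff)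
  then have "0 < emeasure \<nu> (UNIV - \<Omega>)"
    using finite_measure_compl[of \<Omega>] assms(2,3) space by (simp add: emeasure_eq_measure)
  then obtain b0 where b0: "0 < emeasure \<nu> (ball b0 1 \<inter> (UNIV - \<Omega>))"
    using emeasure_pos_imp_ball_Int_pos[OF assms(2), of "UNIV - \<Omega>" 1] by auto
  have "\<exists>b\<in>ball b0 2. 0 < measure \<nu> (ball b \<rho> - \<Omega>)" if "0 < \<rho>" "\<rho> \<le> 1" for \<rho>
  proof -
    obtain b where b: "0 < emeasure \<nu> (ball b \<rho> \<inter> (ball b0 1 \<inter> (UNIV - \<Omega>)))"
      using emeasure_pos_imp_ball_Int_pos[OF assms(2) _ b0 \<open>0 < \<rho>\<close>] by auto
    then have "ball b \<rho> \<inter> (ball b0 1 \<inter> (UNIV - \<Omega>)) \<noteq> {}"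
      by (metis emeasure_empty less_irrefl)
    then obtain z where "dist b z < \<rho>" "dist b0 z < 1"
      by auto
    then have "b \<in> ball b0 2"
      using \<open>\<rho> \<le> 1\<close> dist_triangle[of b0 b z] by (simp add: dist_commute)
    moreover have "emeasure \<nu> (ball b \<rho> \<inter> (ball b0 1 \<inter> (UNIV - \<Omega>))) \<le> emeasure \<nu> (ball b \<rho> - \<Omega>)"
      using assms(2) by (intro emeasure_mono) auto
    ultimately show ?thesis
      using b by (intro bexI[of _ b]) (auto simp: emeasure_eq_measure)
  qed
  then show thesis
    using that by blast
qed

text \<open>\<open>2 c\<close> is a doubling lower bound for the \<open>\<rho>\<close>-balls met by the chains; \<open>\<theta>\<close> is the smaller
  of \<open>c\<close> divided by the size of a \<open>\<rho>\<close>-net of \<open>\<Omega>\<close> and the mass outside \<open>\<Omega>\<close> of the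
  \<open>\<rho>\<close>-ball at which all chains end.\<close>

lemma doubling_length_space_annulus_expansion:
  fixes \<nu> :: "'a::polish_space measure"
  assumes "doubling \<nu>" "sets \<nu> = sets borel" "emeasure \<nu> UNIV < \<infinity>" "length_space TYPE('a)"
    and "\<Omega> \<in> sets borel" "bounded \<Omega>" "0 < emeasure \<nu> \<Omega>" "emeasure \<nu> \<Omega> < emeasure \<nu> UNIV"
    and "\<And>x::'a. annulus x \<delta> \<epsilon> \<noteq> {}"
  obtains c \<theta> where "0 < \<theta>" "\<theta> \<le> c" "\<And>y. y \<in> \<Omega> \<Longrightarrow> 2 * c \<le> measure \<nu> (annulus y \<delta> \<epsilon>)"
    "annulus_expansion \<nu> \<Omega> \<delta> \<epsilon> c \<theta>"
proof -
  have fm: "finite_measure \<nu>"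
    using assms(3) sets_eq_imp_space_eq[OF assms(2)] by (intro finite_measureI) auto
  interpret finite_measure \<nu>
    by (fact fm)
  obtain b0 where b0: "\<And>\<rho>. 0 < \<rho> \<Longrightarrow> \<rho> \<le> 1 \<Longrightarrow> \<exists>b\<in>ball b0 2. 0 < measure \<nu> (ball b \<rho> - \<Omega>)"
    using complement_mass_near[OF fm assms(2,5,8)] by blast
  define V where "V = \<Omega> \<union> ball b0 2"
  have "bounded V"
    using assms(6) by (simp add: V_def)
  obtain \<rho> W where \<rho>: "0 < \<rho>" "\<rho> \<le> 1" and "bounded W"
    and chain: "\<And>a b. a \<in> V \<Longrightarrow> b \<in> V \<Longrightarrow> (annulus_step W \<delta> \<epsilon> \<rho>)\<^sup>+\<^sup>+ a b"
    and inner: "\<And>y. y \<in> V \<Longrightarrow> \<exists>w\<in>W. ball w \<rho> \<subseteq> annulus y \<delta> \<epsilon>"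
    using length_space_annulus_chains[OF assms(4) doubling_compact_cball[OF assms(1-3)] \<open>bounded V\<close> assms(9)]
    by blast
  obtain c0 where c0: "c0 > 0" "\<And>w. w \<in> W \<Longrightarrow> ennreal c0 \<le> emeasure \<nu> (ball w \<rho>)"
    using doubling_uniform_lower_bound[OF assms(1,2) \<open>bounded W\<close> \<rho>(1)] by blast
  have ball_W: "2 * (c0 / 2) \<le> measure \<nu> (ball w \<rho>)" if "w \<in> W" for w
    using c0(2)[OF that] by (simp add: emeasure_eq_measure ennreal_le_iff)
  obtain b where b: "b \<in> ball b0 2" "0 < measure \<nu> (ball b \<rho> - \<Omega>)"
    using b0[OF \<rho>] by blast
  obtain F where F: "finite F" "F \<subseteq> \<Omega>" "\<Omega> \<subseteq> (\<Union>a\<in>F. ball a \<rho>)"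
    using doubling_finite_net[OF assms(1-3,6) \<rho>(1)] .
  have "F \<noteq> {}"
    using F(3) assms(7) by auto
  define \<theta> where "\<theta> = min (c0 / 2 / card F) (measure \<nu> (ball b \<rho> - \<Omega>))"
  show thesis
  proof (rule that)
    show "0 < \<theta>"
      using c0(1) b(2) F(1) \<open>F \<noteq> {}\<close> by (simp add: \<theta>_def card_gt_0_iff)
    have "c0 / 2 / card F \<le> c0 / 2 / 1"
      using c0(1) F(1) \<open>F \<noteq> {}\<close> by (intro divide_left_mono) (auto simp: Suc_leI card_gt_0_iff)
    then show "\<theta> \<le> c0 / 2"
      by (simp add: \<theta>_def)
    show "2 * (c0 / 2) \<le> measure \<nu> (annulus y \<delta> \<epsilon>)" if y: "y \<in> \<Omega>" for y
    proof -
      obtain w where "w \<in> W" "ball w \<rho> \<subseteq> annulus y \<delta> \<epsilon>"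
        using inner[of y] y unfolding V_def by blast
      then show ?thesis
        using ball_W[of w] finite_measure_mono[of "ball w \<rho>" "annulus y \<delta> \<epsilon>"] assms(2) by simp
    qed
    show "annulus_expansion \<nu> \<Omega> \<delta> \<epsilon> (c0 / 2) \<theta>"
    proof (rule annulus_expansion_from_chains[OF fm assms(2) F(1) \<open>F \<noteq> {}\<close> F(3) _ ball_W])
      show "(annulus_step W \<delta> \<epsilon> \<rho>)\<^sup>+\<^sup>+ a b" if "a \<in> F" for a
        using chain[of a b] that F(2) b(1) by (auto simp: V_def)
    qed (use c0(1) in \<open>auto simp: \<theta>_def\<close>)
  qed
qed

subsection \<open>Symmetry of the annulus kernel\<close>

lemma emeasure_annulus_Int_eq_nn_integral:
  assumes "sets \<nu> = sets borel" "L \<in> sets borel"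
  shows "emeasure \<nu> (annulus x \<delta> \<epsilon> \<inter> L) = (\<integral>\<^sup>+y. indicator (annulus x \<delta> \<epsilon>) y * indicator L y \<partial>\<nu>)"
proof -
  have "annulus x \<delta> \<epsilon> \<inter> L \<in> sets \<nu>"
    using assms by simp
  then show ?thesis
    by (simp add: nn_integral_indicator[symmetric] indicator_inter_arith)
qed

lemma borel_measurable_emeasure_annulus_Int:
  fixes \<nu> :: "'a::polish_space measure"
  assumes "finite_measure \<nu>" "sets \<nu> = sets borel" "L \<in> sets borel"
  shows "(\<lambda>x. emeasure \<nu> (annulus x \<delta> \<epsilon> \<inter> L)) \<in> borel_measurable borel"
proof -
  interpret finite_measure \<nu>
    by fact
  note assms(2)[measurable_cong] assms(3)[measurable]
  have "(\<lambda>x. \<integral>\<^sup>+y. indicator (annulus x \<delta> \<epsilon>) y * indicator L y \<partial>\<nu>) \<in> borel_measurable borel"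
    unfolding annulus_def by measurable
  then show ?thesis
    using assms(2,3) by (simp add: emeasure_annulus_Int_eq_nn_integral)
qed

lemma nn_integral_emeasure_annulus_Int_swap:
  fixes \<nu> :: "'a::polish_space measure"
  assumes "finite_measure \<nu>" "sets \<nu> = sets borel" "A \<in> sets borel" "B \<in> sets borel"
  shows "(\<integral>\<^sup>+x\<in>A. emeasure \<nu> (annulus x \<delta> \<epsilon> \<inter> B) \<partial>\<nu>) = (\<integral>\<^sup>+y\<in>B. emeasure \<nu> (annulus y \<delta> \<epsilon> \<inter> A) \<partial>\<nu>)"
proof -
  interpret finite_measure \<nu>
    by fact
  interpret pair_sigma_finite \<nu> \<nu>
    by (simp add: pair_sigma_finite_def sigma_finite_measure_axioms)
  note assms(2)[measurable_cong] assms(3,4)[measurable]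
  define k where "k x y = indicator A x * (indicator (annulus x \<delta> \<epsilon>) y * indicator B y :: ennreal)"
    for x y
  have k_swap: "k x y = indicator B y * (indicator (annulus y \<delta> \<epsilon>) x * indicator A x)" for x y
    by (simp add: k_def indicator_def mem_annulus_commute[of y x])
  have [measurable]: "(\<lambda>(x, y). k x y) \<in> borel_measurable (\<nu> \<Otimes>\<^sub>M \<nu>)"
    unfolding k_def annulus_def by measurable
  have "(\<integral>\<^sup>+x\<in>A. emeasure \<nu> (annulus x \<delta> \<epsilon> \<inter> B) \<partial>\<nu>) = (\<integral>\<^sup>+x. \<integral>\<^sup>+y. k x y \<partial>\<nu> \<partial>\<nu>)"
    using assms(2,4) unfolding k_def
    by (intro nn_integral_cong) (simp add: emeasure_annulus_Int_eq_nn_integral nn_integral_cmult mult.commute)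
  also have "\<dots> = (\<integral>\<^sup>+y. \<integral>\<^sup>+x. k x y \<partial>\<nu> \<partial>\<nu>)"
    by (rule Fubini'[symmetric]) measurable
  also have "\<dots> = (\<integral>\<^sup>+y\<in>B. emeasure \<nu> (annulus y \<delta> \<epsilon> \<inter> A) \<partial>\<nu>)"
    using assms(2,3) unfolding k_swap
    by (intro nn_integral_cong) (simp add: emeasure_annulus_Int_eq_nn_integral nn_integral_cmult mult.commute)
  finally show ?thesis .
qed

lemma annulus_ae_within:
  fixes \<nu> :: "'a::polish_space measure"
  assumes "finite_measure \<nu>" "sets \<nu> = sets borel" "\<Omega> \<in> sets borel" "G \<in> sets borel"
    and "\<And>y. y \<notin> G \<Longrightarrow> emeasure \<nu> (annulus y \<delta> \<epsilon> \<inter> \<Omega>) = 0"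
  obtains \<Omega>' where "\<Omega>' \<in> sets borel" "\<Omega>' \<subseteq> \<Omega>" "measure \<nu> (\<Omega> - \<Omega>') = 0"
    "\<And>y. y \<in> \<Omega>' \<Longrightarrow> measure \<nu> (annulus y \<delta> \<epsilon> - G) = 0"
proof -
  interpret finite_measure \<nu>
    by fact
  note assms(2)[measurable_cong] assms(3,4)[measurable]
  note outside_measurable [measurable] =
    borel_measurable_emeasure_annulus_Int[OF assms(1,2), of "UNIV - G" \<delta> \<epsilon>]
  define \<Omega>' where "\<Omega>' = {x\<in>\<Omega>. emeasure \<nu> (annulus x \<delta> \<epsilon> \<inter> (UNIV - G)) = 0}"
  have "(\<integral>\<^sup>+x\<in>\<Omega>. emeasure \<nu> (annulus x \<delta> \<epsilon> \<inter> (UNIV - G)) \<partial>\<nu>)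
      = (\<integral>\<^sup>+y\<in>UNIV - G. emeasure \<nu> (annulus y \<delta> \<epsilon> \<inter> \<Omega>) \<partial>\<nu>)"
    using assms(1-4) by (intro nn_integral_emeasure_annulus_Int_swap) auto
  also have "\<dots> = (\<integral>\<^sup>+y. 0 \<partial>\<nu>)"
    using assms(5) by (intro nn_integral_cong) (auto simp: indicator_def)
  finally have "(\<integral>\<^sup>+x\<in>\<Omega>. emeasure \<nu> (annulus x \<delta> \<epsilon> \<inter> (UNIV - G)) \<partial>\<nu>) = 0"
    by simp
  moreover have "(\<lambda>x. emeasure \<nu> (annulus x \<delta> \<epsilon> \<inter> (UNIV - G)) * indicator \<Omega> x) \<in> borel_measurable \<nu>"
    by measurable
  ultimately have "AE x in \<nu>. emeasure \<nu> (annulus x \<delta> \<epsilon> \<inter> (UNIV - G)) * indicator \<Omega> x = 0"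
    by (simp add: nn_integral_0_iff_AE)
  then have "AE x in \<nu>. x \<in> \<Omega> \<longrightarrow> emeasure \<nu> (annulus x \<delta> \<epsilon> \<inter> (UNIV - G)) = 0"
    by eventually_elim (auto split: split_indicator)
  moreover have "\<Omega>' \<in> sets borel"
    unfolding \<Omega>'_def by measurable
  moreover have "\<Omega> - \<Omega>' = {x \<in> space \<nu>. \<not> (x \<in> \<Omega> \<longrightarrow> emeasure \<nu> (annulus x \<delta> \<epsilon> \<inter> (UNIV - G)) = 0)}"
    using sets_eq_imp_space_eq[OF assms(2)] by (auto simp: \<Omega>'_def)
  ultimately have "emeasure \<nu> (\<Omega> - \<Omega>') = 0"
    using AE_iff_measurable[of "\<Omega> - \<Omega>'" \<nu>] assms(2,3) by simp
  then have "measure \<nu> (\<Omega> - \<Omega>') = 0"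
    by (simp add: measure_def)
  moreover have "measure \<nu> (annulus y \<delta> \<epsilon> - G) = 0" if "y \<in> \<Omega>'" for y
  proof -
    have "annulus y \<delta> \<epsilon> - G = annulus y \<delta> \<epsilon> \<inter> (UNIV - G)"
      by blast
    then show ?thesis
      using that by (simp add: \<Omega>'_def measure_def)
  qed
  moreover have "\<Omega>' \<subseteq> \<Omega>"
    by (auto simp: \<Omega>'_def)
  ultimately show thesis
    using that \<open>\<Omega>' \<in> sets borel\<close> by blast
qed

subsection \<open>Layers\<close>

definition heavy_points :: "'a::metric_space measure \<Rightarrow> real \<Rightarrow> real \<Rightarrow> real \<Rightarrow> 'a set \<Rightarrow> 'a set \<Rightarrow> 'a set" where
  "heavy_points \<nu> \<delta> \<epsilon> \<theta> U L = {x\<in>U. \<theta> \<le> measure \<nu> (annulus x \<delta> \<epsilon> \<inter> L)}"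

primrec annulus_layer ::
  "'a::metric_space measure \<Rightarrow> real \<Rightarrow> real \<Rightarrow> real \<Rightarrow> 'a set \<Rightarrow> 'a set \<Rightarrow> nat \<Rightarrow> 'a set" where
  "annulus_layer \<nu> \<delta> \<epsilon> \<theta> U \<Gamma> 0 = \<Gamma>"
| "annulus_layer \<nu> \<delta> \<epsilon> \<theta> U \<Gamma> (Suc k) =
     annulus_layer \<nu> \<delta> \<epsilon> \<theta> U \<Gamma> k \<union> heavy_points \<nu> \<delta> \<epsilon> \<theta> U (annulus_layer \<nu> \<delta> \<epsilon> \<theta> U \<Gamma> k)"

lemma heavy_points_sets_borel:
  fixes \<nu> :: "'a::polish_space measure"
  assumes "finite_measure \<nu>" "sets \<nu> = sets borel" "U \<in> sets borel" "L \<in> sets borel"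
  shows "heavy_points \<nu> \<delta> \<epsilon> \<theta> U L \<in> sets borel"
proof -
  note assms(3)[measurable] borel_measurable_emeasure_annulus_Int[OF assms(1,2,4), measurable]
  show ?thesis
    unfolding heavy_points_def measure_def by measurable
qed

lemma annulus_layer_sets_borel:
  fixes \<nu> :: "'a::polish_space measure"
  assumes "finite_measure \<nu>" "sets \<nu> = sets borel" "U \<in> sets borel" "\<Gamma> \<in> sets borel"
  shows "annulus_layer \<nu> \<delta> \<epsilon> \<theta> U \<Gamma> k \<in> sets borel"
  by (induction k) (auto intro!: sets.Un heavy_points_sets_borel[OF assms(1-3)] simp: assms(4))

lemma annulus_layer_bounds: "\<Gamma> \<subseteq> annulus_layer \<nu> \<delta> \<epsilon> \<theta> U \<Gamma> k" "annulus_layer \<nu> \<delta> \<epsilon> \<theta> U \<Gamma> k \<subseteq> U \<union> \<Gamma>"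
  by (induction k) (auto simp: heavy_points_def)

lemma measure_annulus_Diff_le_layer:
  fixes \<nu> :: "'a::metric_space measure"
  assumes "finite_measure \<nu>" "sets \<nu> = sets borel" "\<Omega> \<in> sets borel" "\<Gamma> \<in> sets borel" "L \<in> sets borel"
    and "\<Omega>' \<in> sets borel" "\<Omega>' \<subseteq> \<Omega>" "measure \<nu> (\<Omega> - \<Omega>') = 0" "\<Gamma> \<subseteq> L"
    and "measure \<nu> (annulus y \<delta> \<epsilon> - (\<Omega> \<union> \<Gamma>)) = 0"
  shows "measure \<nu> (annulus y \<delta> \<epsilon> - (\<Omega>' - L)) \<le> measure \<nu> (annulus y \<delta> \<epsilon> \<inter> L)"
proof -
  interpret finite_measure \<nu>
    by fact
  have sets: "annulus y \<delta> \<epsilon> - (\<Omega> \<union> \<Gamma>) \<in> sets \<nu>" "\<Omega> - \<Omega>' \<in> sets \<nu>" "annulus y \<delta> \<epsilon> \<inter> L \<in> sets \<nu>"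
    using assms(2-6) by (simp_all add: sets.Diff sets.Un sets.Int)
  have "measure \<nu> (annulus y \<delta> \<epsilon> - (\<Omega>' - L))
      \<le> measure \<nu> ((annulus y \<delta> \<epsilon> - (\<Omega> \<union> \<Gamma>)) \<union> (\<Omega> - \<Omega>') \<union> (annulus y \<delta> \<epsilon> \<inter> L))"
    using sets assms(9) by (intro finite_measure_mono) auto
  also have "\<dots> \<le> measure \<nu> (annulus y \<delta> \<epsilon> - (\<Omega> \<union> \<Gamma>)) + measure \<nu> (\<Omega> - \<Omega>') + measure \<nu> (annulus y \<delta> \<epsilon> \<inter> L)"
    using sets by (intro order_trans[OF measure_Un_le] add_right_mono measure_Un_le) auto
  finally show ?thesis
    using assms(8,10) by simp
qed

lemma annulus_layer_step:
  fixes \<nu> :: "'a::polish_space measure"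
  assumes "finite_measure \<nu>" "sets \<nu> = sets borel" "\<Omega> \<in> sets borel" "\<Gamma> \<in> sets borel" "L \<in> sets borel"
    and "\<Omega>' \<in> sets borel" "\<Omega>' \<subseteq> \<Omega>" "measure \<nu> (\<Omega> - \<Omega>') = 0" "\<Gamma> \<subseteq> L"
    and "\<And>y. y \<in> \<Omega>' \<Longrightarrow> measure \<nu> (annulus y \<delta> \<epsilon> - (\<Omega> \<union> \<Gamma>)) = 0"
    and "\<And>y. y \<in> \<Omega> \<Longrightarrow> 2 * c \<le> measure \<nu> (annulus y \<delta> \<epsilon>)"
    and "\<theta> \<le> c" "annulus_expansion \<nu> \<Omega> \<delta> \<epsilon> c \<theta>"
  defines "T \<equiv> heavy_points \<nu> \<delta> \<epsilon> \<theta> \<Omega>' L"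
  shows "\<Omega>' - L \<subseteq> T \<or> \<theta> + measure \<nu> (\<Omega>' - (L \<union> T)) \<le> measure \<nu> (\<Omega>' - L)"
proof -
  interpret finite_measure \<nu>
    by fact
  define S where "S = \<Omega>' - L"
  have S: "S \<in> sets borel" "S \<subseteq> \<Omega>"
    using assms(5-7) by (auto simp: S_def)
  have outside: "measure \<nu> (annulus y \<delta> \<epsilon> - S) \<le> measure \<nu> (annulus y \<delta> \<epsilon> \<inter> L)" if "y \<in> \<Omega>'" for y
    unfolding S_def using assms(1-9) assms(10)[OF that] by (rule measure_annulus_Diff_le_layer)
  show ?thesis
  proof (cases "measure \<nu> S < c")
    case True
    have "y \<in> T" if "y \<in> S" for y
    proof -
      have "measure \<nu> (annulus y \<delta> \<epsilon>) = measure \<nu> (annulus y \<delta> \<epsilon> \<inter> S) + measure \<nu> (annulus y \<delta> \<epsilon> - S)"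
        using S(1) assms(2) finite_measure_Diff'[of "annulus y \<delta> \<epsilon>" S] by simp
      moreover have "measure \<nu> (annulus y \<delta> \<epsilon> \<inter> S) \<le> measure \<nu> S"
        using S(1) assms(2) by (intro finite_measure_mono) auto
      ultimately show ?thesis
        using that True S(2) assms(11,12) outside[of y] by (force simp: T_def S_def heavy_points_def)
    qed
    then show ?thesis
      by (auto simp: S_def)
  next
    case False
    then obtain Y where Y: "Y \<in> sets borel" "Y \<subseteq> S" "\<theta> \<le> measure \<nu> Y"
      "\<And>y. y \<in> Y \<Longrightarrow> \<theta> \<le> measure \<nu> (annulus y \<delta> \<epsilon> - S)"
      using assms(13) S unfolding annulus_expansion_def by (meson not_less)
    have "Y \<subseteq> T"
      using Y(2,4) outside by (force simp: T_def S_def heavy_points_def)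
    then have "measure \<nu> (\<Omega>' - (L \<union> T)) \<le> measure \<nu> (S - Y)"
      using S(1) Y(1) assms(2) by (intro finite_measure_mono) (auto simp: S_def)
    also have "\<dots> = measure \<nu> S - measure \<nu> Y"
      using S(1) Y(1,2) assms(2) by (intro finite_measure_Diff) auto
    finally show ?thesis
      using Y(3) by (simp add: S_def)
  qed
qed

lemma annulus_layers_exhaust:
  fixes \<nu> :: "'a::polish_space measure"
  assumes "finite_measure \<nu>" "sets \<nu> = sets borel" "\<Omega> \<in> sets borel" "\<Gamma> \<in> sets borel"
    and "\<Omega>' \<in> sets borel" "\<Omega>' \<subseteq> \<Omega>" "measure \<nu> (\<Omega> - \<Omega>') = 0"
    and "\<And>y. y \<in> \<Omega>' \<Longrightarrow> measure \<nu> (annulus y \<delta> \<epsilon> - (\<Omega> \<union> \<Gamma>)) = 0"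
    and "\<And>y. y \<in> \<Omega> \<Longrightarrow> 2 * c \<le> measure \<nu> (annulus y \<delta> \<epsilon>)"
    and "0 < \<theta>" "\<theta> \<le> c" "annulus_expansion \<nu> \<Omega> \<delta> \<epsilon> c \<theta>"
  obtains k where "\<Omega>' \<subseteq> annulus_layer \<nu> \<delta> \<epsilon> \<theta> \<Omega>' \<Gamma> k"
proof -
  interpret finite_measure \<nu>
    by fact
  let ?L = "annulus_layer \<nu> \<delta> \<epsilon> \<theta> \<Omega>' \<Gamma>"
  have progress: "\<Omega>' \<subseteq> ?L k \<or> k * \<theta> + measure \<nu> (\<Omega>' - ?L k) \<le> measure \<nu> \<Omega>'" for k
  proof (induction k)
    case 0
    show ?case
      using assms(2,5) by (auto intro: finite_measure_mono)
  next
    case (Suc k)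
    have "?L k \<in> sets borel" "\<Gamma> \<subseteq> ?L k"
      using annulus_layer_sets_borel[OF assms(1,2,5,4)] annulus_layer_bounds(1) by blast+
    then have "\<Omega>' - ?L k \<subseteq> heavy_points \<nu> \<delta> \<epsilon> \<theta> \<Omega>' (?L k)
        \<or> \<theta> + measure \<nu> (\<Omega>' - ?L (Suc k)) \<le> measure \<nu> (\<Omega>' - ?L k)"
      using annulus_layer_step[OF assms(1-4) _ assms(5-7) _ assms(8,9,11,12)] by simp
    then show ?case
      using Suc.IH by (auto simp: algebra_simps)
  qed
  obtain k :: nat where "measure \<nu> \<Omega>' < k * \<theta>"
    using reals_Archimedean3[OF assms(10)] by blast
  then have "\<not> k * \<theta> + measure \<nu> (\<Omega>' - ?L k) \<le> measure \<nu> \<Omega>'"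
    using measure_nonneg[of \<nu> "\<Omega>' - ?L k"] by linarith
  then show thesis
    using progress[of k] that by blast
qed

subsection \<open>Energy estimates\<close>

lemma abs_powr_le_two_powr:
  fixes a b p :: real
  assumes "0 \<le> p"
  shows "\<bar>a\<bar> powr p \<le> 2 powr p * (\<bar>b - a\<bar> powr p + \<bar>b\<bar> powr p)"
proof -
  define M where "M = max \<bar>b - a\<bar> \<bar>b\<bar>"
  have "\<bar>a\<bar> \<le> 2 * M"
    unfolding M_def by (smt (verit))
  then have "\<bar>a\<bar> powr p \<le> (2 * M) powr p"
    using assms by (intro powr_mono2) auto
  also have "\<dots> = 2 powr p * M powr p"
    by (simp add: M_def powr_mult)
  also have "M powr p \<le> \<bar>b - a\<bar> powr p + \<bar>b\<bar> powr p"
    by (simp add: M_def max_def)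
  finally show ?thesis
    by simp
qed

lemma ennreal_mult_le_iff_le_inverse_mult:
  assumes "0 < K"
  shows "ennreal K * x \<le> y \<longleftrightarrow> x \<le> ennreal (1 / K) * y"
proof
  assume "ennreal K * x \<le> y"
  then have "ennreal (1 / K) * (ennreal K * x) \<le> ennreal (1 / K) * y"
    by (rule mult_left_mono) simp
  then show "x \<le> ennreal (1 / K) * y"
    using assms by (simp add: mult.assoc[symmetric] ennreal_mult[symmetric])
next
  assume "x \<le> ennreal (1 / K) * y"
  then have "ennreal K * x \<le> ennreal K * (ennreal (1 / K) * y)"
    by (rule mult_left_mono) simp
  then show "ennreal K * x \<le> y"
    using assms by (simp add: mult.assoc[symmetric] ennreal_mult[symmetric])
qed

lemma nn_integral_restrict_le_of_emeasure_le:
  fixes M \<nu> :: "'a::topological_space measure"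
  assumes "sets M = sets borel" "sets \<nu> = sets borel" "K \<in> sets borel" "0 \<le> \<beta>"
    and "\<And>A. A \<in> sets borel \<Longrightarrow> ennreal \<beta> * emeasure \<nu> (A \<inter> K) \<le> emeasure M A"
    and "h \<in> borel_measurable borel"
  shows "ennreal \<beta> * (\<integral>\<^sup>+y. h y * indicator K y \<partial>\<nu>) \<le> (\<integral>\<^sup>+y. h y \<partial>M)"
proof -
  note assms(2)[measurable_cong] assms(3,6)[measurable]
  define N where "N = density \<nu> (\<lambda>y. ennreal \<beta> * indicator K y)"
  have sets_N: "sets N = sets borel"
    using assms(2) by (simp add: N_def)
  have "emeasure N A \<le> emeasure M A" for A
  proof (cases "A \<in> sets borel")
    case True
    then have "emeasure N A = ennreal \<beta> * emeasure \<nu> (A \<inter> K)"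
      using assms(2,3) unfolding N_def
      by (simp add: emeasure_density nn_integral_cmult_indicator[symmetric] indicator_inter_arith ac_simps)
    then show ?thesis
      using assms(5)[OF True] by simp
  qed (simp add: emeasure_notin_sets sets_N)
  then have "N \<le> M"
    using sets_N assms(1) sets_eq_imp_space_eq[of N M] by (auto simp: le_measure_iff le_fun_def)
  have "ennreal \<beta> * (\<integral>\<^sup>+y. h y * indicator K y \<partial>\<nu>) = (\<integral>\<^sup>+y. h y \<partial>N)"
    unfolding N_def by (simp add: nn_integral_density nn_integral_cmult[symmetric] ac_simps)
  also have "\<dots> \<le> (\<integral>\<^sup>+y. h y \<partial>M)"
    using \<open>N \<le> M\<close> sets_N assms(1) by (intro nn_integral_mono_measure) auto
  finally show ?thesis .
qed

definition annulus_energy ::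
  "'a::metric_space measure \<Rightarrow> real \<Rightarrow> real \<Rightarrow> real \<Rightarrow> ('a \<Rightarrow> real) \<Rightarrow> 'a set \<Rightarrow> 'a set \<Rightarrow> ennreal" where
  "annulus_energy \<nu> \<delta> \<epsilon> p f \<Omega> G =
     (\<integral>\<^sup>+x\<in>\<Omega>. (\<integral>\<^sup>+y\<in>annulus x \<delta> \<epsilon> \<inter> G. ennreal (\<bar>f y - f x\<bar> powr p) \<partial>\<nu>) \<partial>\<nu>)"

lemma borel_measurable_annulus_energy_integrand:
  fixes \<nu> :: "'a::polish_space measure"
  assumes "finite_measure \<nu>" "sets \<nu> = sets borel" "f \<in> borel_measurable borel" "G \<in> sets borel"
  shows "(\<lambda>x. \<integral>\<^sup>+y\<in>annulus x \<delta> \<epsilon> \<inter> G. ennreal (\<bar>f y - f x\<bar> powr p) \<partial>\<nu>) \<in> borel_measurable borel"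
proof -
  interpret finite_measure \<nu>
    by fact
  note assms(2)[measurable_cong] assms(3,4)[measurable]
  show ?thesis
    unfolding annulus_def by measurable
qed

lemma annulus_energy_mono:
  "G \<subseteq> G' \<Longrightarrow> annulus_energy \<nu> \<delta> \<epsilon> p f \<Omega> G \<le> annulus_energy \<nu> \<delta> \<epsilon> p f \<Omega> G'"
  unfolding annulus_energy_def
  by (intro nn_integral_mono mult_right_mono) (auto split: split_indicator)

lemma annulus_energy_le_kernel_energy:
  fixes \<nu> :: "'a::polish_space measure" and m :: "'a \<Rightarrow> 'a measure"
  assumes "finite_measure \<nu>" "sets \<nu> = sets borel" "\<And>x. sets (m x) = sets borel" "0 \<le> \<beta>"
    and "\<And>x A. x \<in> \<Omega> \<Longrightarrow> A \<in> sets borel \<Longrightarrow> ennreal \<beta> * emeasure \<nu> (A \<inter> annulus x \<delta> \<epsilon>) \<le> emeasure (m x) A"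
    and "f \<in> borel_measurable borel" "\<Omega> \<in> sets borel" "G \<in> sets borel"
  shows "ennreal \<beta> * annulus_energy \<nu> \<delta> \<epsilon> p f \<Omega> G
    \<le> (\<integral>\<^sup>+x\<in>\<Omega>. (\<integral>\<^sup>+y\<in>G. ennreal (\<bar>f y - f x\<bar> powr p) \<partial>m x) \<partial>\<nu>)"
proof -
  note assms(2)[measurable_cong] assms(6-8)[measurable]
    borel_measurable_annulus_energy_integrand[OF assms(1,2,6,8), measurable]
  have "ennreal \<beta> * (\<integral>\<^sup>+y\<in>annulus x \<delta> \<epsilon> \<inter> G. ennreal (\<bar>f y - f x\<bar> powr p) \<partial>\<nu>)
      \<le> (\<integral>\<^sup>+y\<in>G. ennreal (\<bar>f y - f x\<bar> powr p) \<partial>m x)" if x: "x \<in> \<Omega>" for x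
  proof -
    have "(\<integral>\<^sup>+y\<in>annulus x \<delta> \<epsilon> \<inter> G. ennreal (\<bar>f y - f x\<bar> powr p) \<partial>\<nu>)
        = (\<integral>\<^sup>+y. (ennreal (\<bar>f y - f x\<bar> powr p) * indicator G y) * indicator (annulus x \<delta> \<epsilon>) y \<partial>\<nu>)"
      by (intro nn_integral_cong) (simp split: split_indicator)
    also have "ennreal \<beta> * \<dots> \<le> (\<integral>\<^sup>+y\<in>G. ennreal (\<bar>f y - f x\<bar> powr p) \<partial>m x)"
    proof (rule nn_integral_restrict_le_of_emeasure_le[OF assms(3,2) annulus_sets_borel assms(4)])
      show "ennreal \<beta> * emeasure \<nu> (A \<inter> annulus x \<delta> \<epsilon>) \<le> emeasure (m x) A" if "A \<in> sets borel" for A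
        using assms(5)[OF x that] .
    qed measurable
    finally show ?thesis
      by simp
  qed
  then have "(\<integral>\<^sup>+x. ennreal \<beta> * ((\<integral>\<^sup>+y\<in>annulus x \<delta> \<epsilon> \<inter> G. ennreal (\<bar>f y - f x\<bar> powr p) \<partial>\<nu>) * indicator \<Omega> x) \<partial>\<nu>)
      \<le> (\<integral>\<^sup>+x\<in>\<Omega>. (\<integral>\<^sup>+y\<in>G. ennreal (\<bar>f y - f x\<bar> powr p) \<partial>m x) \<partial>\<nu>)"
    by (intro nn_integral_mono) (auto simp: mult.assoc[symmetric] split: split_indicator)
  then show ?thesis
    unfolding annulus_energy_def by (simp add: nn_integral_cmult)
qed

lemma heavy_point_bound:
  fixes \<nu> :: "'a::metric_space measure"
  assumes "sets \<nu> = sets borel" "f \<in> borel_measurable borel" "0 \<le> p"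
    and "G \<in> sets borel" "L \<in> sets borel" "L \<subseteq> G"
  shows "emeasure \<nu> (annulus x \<delta> \<epsilon> \<inter> L) * ennreal (\<bar>f x\<bar> powr p)
    \<le> ennreal (2 powr p) * ((\<integral>\<^sup>+y\<in>annulus x \<delta> \<epsilon> \<inter> G. ennreal (\<bar>f y - f x\<bar> powr p) \<partial>\<nu>)
        + (\<integral>\<^sup>+y\<in>L. ennreal (\<bar>f y\<bar> powr p) \<partial>\<nu>))"
proof -
  note assms(1)[measurable_cong] assms(2,4,5)[measurable]
  have "emeasure \<nu> (annulus x \<delta> \<epsilon> \<inter> L) * ennreal (\<bar>f x\<bar> powr p)
      = (\<integral>\<^sup>+y. ennreal (\<bar>f x\<bar> powr p) * indicator (annulus x \<delta> \<epsilon> \<inter> L) y \<partial>\<nu>)"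
    using assms(1,5) by (simp add: nn_integral_cmult_indicator mult.commute)
  also have "\<dots> \<le> (\<integral>\<^sup>+y. ennreal (2 powr p) * (ennreal (\<bar>f y - f x\<bar> powr p) * indicator (annulus x \<delta> \<epsilon> \<inter> G) y
      + ennreal (\<bar>f y\<bar> powr p) * indicator L y) \<partial>\<nu>)"
  proof (intro nn_integral_mono)
    fix y
    show "ennreal (\<bar>f x\<bar> powr p) * indicator (annulus x \<delta> \<epsilon> \<inter> L) y
      \<le> ennreal (2 powr p) * (ennreal (\<bar>f y - f x\<bar> powr p) * indicator (annulus x \<delta> \<epsilon> \<inter> G) y
        + ennreal (\<bar>f y\<bar> powr p) * indicator L y)"
    proof (cases "y \<in> annulus x \<delta> \<epsilon> \<inter> L")
      case True
      have "ennreal (\<bar>f x\<bar> powr p) \<le> ennreal (2 powr p) * (ennreal (\<bar>f y - f x\<bar> powr p) + ennreal (\<bar>f y\<bar> powr p))"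
        using abs_powr_le_two_powr[OF assms(3), of "f x" "f y"]
        by (simp add: ennreal_mult[symmetric] ennreal_plus[symmetric] ennreal_leI del: ennreal_plus)
      then show ?thesis
        using True assms(6) by auto
    qed simp
  qed
  also have "\<dots> = ennreal (2 powr p) * ((\<integral>\<^sup>+y\<in>annulus x \<delta> \<epsilon> \<inter> G. ennreal (\<bar>f y - f x\<bar> powr p) \<partial>\<nu>)
        + (\<integral>\<^sup>+y\<in>L. ennreal (\<bar>f y\<bar> powr p) \<partial>\<nu>))"
    by (simp add: nn_integral_cmult nn_integral_add)
  finally show ?thesis .
qed

lemma heavy_points_energy:
  fixes \<nu> :: "'a::polish_space measure"
  assumes "finite_measure \<nu>" "sets \<nu> = sets borel" "f \<in> borel_measurable borel" "0 \<le> p" "0 < \<theta>"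
    and "\<Omega> \<in> sets borel" "G \<in> sets borel" "L \<in> sets borel" "L \<subseteq> G" "U \<subseteq> \<Omega>"
  shows "(\<integral>\<^sup>+x\<in>heavy_points \<nu> \<delta> \<epsilon> \<theta> U L. ennreal (\<bar>f x\<bar> powr p) \<partial>\<nu>)
    \<le> ennreal (2 powr p / \<theta>) * (annulus_energy \<nu> \<delta> \<epsilon> p f \<Omega> G
        + ennreal (measure \<nu> \<Omega>) * (\<integral>\<^sup>+y\<in>L. ennreal (\<bar>f y\<bar> powr p) \<partial>\<nu>))"
proof -
  interpret finite_measure \<nu>
    by fact
  note assms(2)[measurable_cong] assms(3,6-8)[measurable]
  define E where "E x = (\<integral>\<^sup>+y\<in>annulus x \<delta> \<epsilon> \<inter> G. ennreal (\<bar>f y - f x\<bar> powr p) \<partial>\<nu>)" for x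
  define I where "I = (\<integral>\<^sup>+y\<in>L. ennreal (\<bar>f y\<bar> powr p) \<partial>\<nu>)"
  have [measurable]: "E \<in> borel_measurable borel"
    unfolding E_def by (rule borel_measurable_annulus_energy_integrand[OF assms(1-3,7)])
  have "ennreal (\<bar>f x\<bar> powr p) * indicator (heavy_points \<nu> \<delta> \<epsilon> \<theta> U L) x
      \<le> ennreal (2 powr p / \<theta>) * ((E x + I) * indicator \<Omega> x)" for x
  proof (cases "x \<in> heavy_points \<nu> \<delta> \<epsilon> \<theta> U L")
    case True
    then have "x \<in> \<Omega>" and heavy: "ennreal \<theta> \<le> emeasure \<nu> (annulus x \<delta> \<epsilon> \<inter> L)"
      using assms(10) by (auto simp: heavy_points_def emeasure_eq_measure ennreal_leI)
    have "ennreal \<theta> * ennreal (\<bar>f x\<bar> powr p) \<le> emeasure \<nu> (annulus x \<delta> \<epsilon> \<inter> L) * ennreal (\<bar>f x\<bar> powr p)"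
      using heavy by (rule mult_right_mono) simp
    also have "\<dots> \<le> ennreal (2 powr p) * (E x + I)"
      unfolding E_def I_def by (rule heavy_point_bound[OF assms(2-4,7-9)])
    finally have "ennreal (\<bar>f x\<bar> powr p) \<le> ennreal (1 / \<theta>) * (ennreal (2 powr p) * (E x + I))"
      by (simp add: ennreal_mult_le_iff_le_inverse_mult[OF assms(5)])
    also have "\<dots> = ennreal (2 powr p / \<theta>) * (E x + I)"
      using assms(5) by (simp add: mult.assoc[symmetric] ennreal_mult[symmetric])
    finally show ?thesis
      using True \<open>x \<in> \<Omega>\<close> by simp
  qed simp
  then have "(\<integral>\<^sup>+x\<in>heavy_points \<nu> \<delta> \<epsilon> \<theta> U L. ennreal (\<bar>f x\<bar> powr p) \<partial>\<nu>)
      \<le> ennreal (2 powr p / \<theta>) * (\<integral>\<^sup>+x. E x * indicator \<Omega> x + I * indicator \<Omega> x \<partial>\<nu>)"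
    by (subst nn_integral_cmult[symmetric]) (auto intro: nn_integral_mono simp: distrib_right)
  moreover have "(\<integral>\<^sup>+x. E x * indicator \<Omega> x + I * indicator \<Omega> x \<partial>\<nu>)
      = (\<integral>\<^sup>+x. E x * indicator \<Omega> x \<partial>\<nu>) + (\<integral>\<^sup>+x. I * indicator \<Omega> x \<partial>\<nu>)"
    by (intro nn_integral_add) auto
  moreover have "(\<integral>\<^sup>+x. E x * indicator \<Omega> x \<partial>\<nu>) = annulus_energy \<nu> \<delta> \<epsilon> p f \<Omega> G"
    by (simp add: annulus_energy_def E_def)
  moreover have "(\<integral>\<^sup>+x. I * indicator \<Omega> x \<partial>\<nu>) = ennreal (measure \<nu> \<Omega>) * I"
    using assms(2,6) by (simp add: nn_integral_cmult_indicator emeasure_eq_measure mult.commute)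
  ultimately show ?thesis
    by (simp add: I_def)
qed

lemma annulus_layer_energy:
  fixes \<nu> :: "'a::polish_space measure"
  assumes "finite_measure \<nu>" "sets \<nu> = sets borel" "f \<in> borel_measurable borel" "0 \<le> p" "0 < \<theta>"
    and "\<Omega> \<in> sets borel" "U \<in> sets borel" "U \<subseteq> \<Omega>" "\<Gamma> \<in> sets borel" "G \<in> sets borel" "U \<union> \<Gamma> \<subseteq> G"
  defines "q \<equiv> 1 + 2 powr p / \<theta> * (1 + measure \<nu> \<Omega>)"
  shows "(\<integral>\<^sup>+y\<in>annulus_layer \<nu> \<delta> \<epsilon> \<theta> U \<Gamma> k. ennreal (\<bar>f y\<bar> powr p) \<partial>\<nu>)
    \<le> ennreal (q ^ k) * (annulus_energy \<nu> \<delta> \<epsilon> p f \<Omega> G + (\<integral>\<^sup>+y\<in>\<Gamma>. ennreal (\<bar>f y\<bar> powr p) \<partial>\<nu>))"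
proof (induction k)
  case 0
  show ?case
    by (simp add: add_increasing)
next
  case (Suc k)
  note assms(2)[measurable_cong] assms(3)[measurable]
  define F where "F y = ennreal (\<bar>f y\<bar> powr p)" for y
  define L where "L = annulus_layer \<nu> \<delta> \<epsilon> \<theta> U \<Gamma> k"
  define D where "D = annulus_energy \<nu> \<delta> \<epsilon> p f \<Omega> G"
  define X where "X = D + (\<integral>\<^sup>+y\<in>\<Gamma>. F y \<partial>\<nu>)"
  define c where "c = 2 powr p / \<theta>"
  have L: "L \<in> sets borel" "L \<subseteq> G"
    using annulus_layer_sets_borel[OF assms(1,2,7,9)] annulus_layer_bounds(2) assms(11)
    unfolding L_def by blast+
  have T: "heavy_points \<nu> \<delta> \<epsilon> \<theta> U L \<in> sets borel"
    using heavy_points_sets_borel[OF assms(1,2,7) L(1)] .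
  have IH: "(\<integral>\<^sup>+y\<in>L. F y \<partial>\<nu>) \<le> ennreal (q ^ k) * X"
    using Suc.IH by (simp add: F_def L_def X_def D_def)
  have "1 \<le> q"
    using assms(5) measure_nonneg[of \<nu> \<Omega>] by (simp add: q_def)
  then have "D \<le> ennreal (q ^ k) * X"
    using mult_mono[of 1 "ennreal (q ^ k)" D X] by (simp add: X_def add_increasing2 ennreal_leI)
  have "(\<integral>\<^sup>+y\<in>annulus_layer \<nu> \<delta> \<epsilon> \<theta> U \<Gamma> (Suc k). F y \<partial>\<nu>)
      \<le> (\<integral>\<^sup>+y. F y * indicator L y + F y * indicator (heavy_points \<nu> \<delta> \<epsilon> \<theta> U L) y \<partial>\<nu>)"
    unfolding L_def by (intro nn_integral_mono) (auto split: split_indicator)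
  also have "\<dots> = (\<integral>\<^sup>+y\<in>L. F y \<partial>\<nu>) + (\<integral>\<^sup>+y\<in>heavy_points \<nu> \<delta> \<epsilon> \<theta> U L. F y \<partial>\<nu>)"
    using L(1) T by (intro nn_integral_add) (auto simp: F_def)
  also have "\<dots> \<le> (\<integral>\<^sup>+y\<in>L. F y \<partial>\<nu>) + ennreal c * (D + ennreal (measure \<nu> \<Omega>) * (\<integral>\<^sup>+y\<in>L. F y \<partial>\<nu>))"
    using heavy_points_energy[OF assms(1-6,10) L(1,2) assms(8)]
    by (intro add_left_mono) (simp add: F_def D_def c_def)
  also have "\<dots> \<le> ennreal (q ^ k) * X + ennreal c * (ennreal (q ^ k) * X + ennreal (measure \<nu> \<Omega>) * (ennreal (q ^ k) * X))"
    using IH \<open>D \<le> _\<close> by (intro add_mono mult_left_mono order.refl) auto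
  also have "\<dots> = ennreal (q ^ Suc k) * X"
  proof -
    have "0 \<le> c" "0 \<le> measure \<nu> \<Omega>"
      using assms(5) by (simp_all add: c_def)
    have "ennreal q = ennreal 1 + ennreal (c * (1 + measure \<nu> \<Omega>))"
      unfolding q_def c_def[symmetric] using \<open>0 \<le> c\<close> \<open>0 \<le> measure \<nu> \<Omega>\<close> by (intro ennreal_plus) auto
    also have "ennreal (c * (1 + measure \<nu> \<Omega>)) = ennreal c * (ennreal 1 + ennreal (measure \<nu> \<Omega>))"
      using \<open>0 \<le> c\<close> \<open>0 \<le> measure \<nu> \<Omega>\<close> by (simp add: ennreal_mult ennreal_plus)
    finally have "ennreal q = 1 + ennreal c * (1 + ennreal (measure \<nu> \<Omega>))"
      by simp
    moreover have "ennreal (q ^ Suc k) = ennreal q * ennreal (q ^ k)"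
      using \<open>1 \<le> q\<close> by (simp add: ennreal_mult)
    ultimately show ?thesis
      by (simp add: algebra_simps)
  qed
  finally show ?case
    by (simp add: F_def X_def D_def)
qed

lemma poincare_ineq_of_bound:
  assumes "0 < K"
    and "\<And>u \<psi>. u \<in> borel_measurable borel \<Longrightarrow> \<psi> \<in> borel_measurable borel \<Longrightarrow>
      (\<integral>\<^sup>+x\<in>\<Omega>. ennreal (\<bar>u x\<bar> powr p) \<partial>\<nu>) \<le> ennreal K *
        ((\<integral>\<^sup>+x\<in>\<Omega>. (\<integral>\<^sup>+y\<in>\<Omega> \<union> m_boundary m \<Omega>.
            ennreal (\<bar>(if y \<in> \<Omega> then u y else \<psi> y) - u x\<bar> powr p) \<partial>(m x)) \<partial>\<nu>)
         + (\<integral>\<^sup>+y\<in>m_boundary m \<Omega>. ennreal (\<bar>\<psi> y\<bar> powr p) \<partial>\<nu>))"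
  shows "poincare_ineq m \<nu> \<Omega> p"
  unfolding poincare_ineq_def
proof (intro exI[of _ "1 / K"] conjI allI impI)
  show "0 < 1 / K"
    using assms(1) by simp
  fix u \<psi> :: "'a \<Rightarrow> real"
  assume "u \<in> borel_measurable borel" "\<psi> \<in> borel_measurable borel"
  then show "ennreal (1 / K) * (\<integral>\<^sup>+x\<in>\<Omega>. ennreal (\<bar>u x\<bar> powr p) \<partial>\<nu>)
      \<le> (\<integral>\<^sup>+x\<in>\<Omega>. (\<integral>\<^sup>+y\<in>\<Omega> \<union> m_boundary m \<Omega>.
            ennreal (\<bar>(if y \<in> \<Omega> then u y else \<psi> y) - u x\<bar> powr p) \<partial>(m x)) \<partial>\<nu>)
         + (\<integral>\<^sup>+y\<in>m_boundary m \<Omega>. ennreal (\<bar>\<psi> y\<bar> powr p) \<partial>\<nu>)"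
    using assms by (simp add: ennreal_mult_le_iff_le_inverse_mult)
qed

lemma annulus_poincare_bound:
  fixes \<nu> :: "'a::polish_space measure" and m :: "'a \<Rightarrow> 'a measure"
  assumes "finite_measure \<nu>" "sets \<nu> = sets borel" "\<And>x. sets (m x) = sets borel"
    and "0 < \<beta>" "\<And>x A. x \<in> \<Omega> \<Longrightarrow> A \<in> sets borel \<Longrightarrow> ennreal \<beta> * emeasure \<nu> (A \<inter> annulus x \<delta> \<epsilon>) \<le> emeasure (m x) A"
    and "0 \<le> p" "0 < \<theta>" "\<Omega> \<in> sets borel" "\<Gamma> \<in> sets borel" "\<Gamma> \<inter> \<Omega> = {}"
    and "\<Omega>' \<in> sets borel" "\<Omega>' \<subseteq> \<Omega>" "measure \<nu> (\<Omega> - \<Omega>') = 0" "\<Omega>' \<subseteq> annulus_layer \<nu> \<delta> \<epsilon> \<theta> \<Omega>' \<Gamma> k"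
    and "u \<in> borel_measurable borel" "\<psi> \<in> borel_measurable borel"
  shows "(\<integral>\<^sup>+x\<in>\<Omega>. ennreal (\<bar>u x\<bar> powr p) \<partial>\<nu>)
    \<le> ennreal ((1 + 2 powr p / \<theta> * (1 + measure \<nu> \<Omega>)) ^ k * max (1 / \<beta>) 1) *
      ((\<integral>\<^sup>+x\<in>\<Omega>. (\<integral>\<^sup>+y\<in>\<Omega> \<union> \<Gamma>. ennreal (\<bar>(if y \<in> \<Omega> then u y else \<psi> y) - u x\<bar> powr p) \<partial>(m x)) \<partial>\<nu>)
       + (\<integral>\<^sup>+y\<in>\<Gamma>. ennreal (\<bar>\<psi> y\<bar> powr p) \<partial>\<nu>))"
proof -
  interpret finite_measure \<nu>
    by fact
  note assms(2)[measurable_cong] assms(8,9,11,15,16)[measurable]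
  define f where "f y = (if y \<in> \<Omega> then u y else \<psi> y)" for y
  define q where "q = 1 + 2 powr p / \<theta> * (1 + measure \<nu> \<Omega>)"
  define M where "M = max (1 / \<beta>) 1"
  define E where "E = (\<integral>\<^sup>+x\<in>\<Omega>. (\<integral>\<^sup>+y\<in>\<Omega> \<union> \<Gamma>. ennreal (\<bar>f y - f x\<bar> powr p) \<partial>(m x)) \<partial>\<nu>)"
  define B where "B = (\<integral>\<^sup>+y\<in>\<Gamma>. ennreal (\<bar>f y\<bar> powr p) \<partial>\<nu>)"
  have f [measurable]: "f \<in> borel_measurable borel"
    unfolding f_def by measurable
  have "1 \<le> q"
    using assms(7) measure_nonneg[of \<nu> \<Omega>] by (simp add: q_def)
  have "annulus_energy \<nu> \<delta> \<epsilon> p f \<Omega> (\<Omega>' \<union> \<Gamma>) \<le> annulus_energy \<nu> \<delta> \<epsilon> p f \<Omega> (\<Omega> \<union> \<Gamma>)"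
    using assms(12) by (intro annulus_energy_mono) auto
  also have "\<dots> \<le> ennreal (1 / \<beta>) * E"
  proof -
    have "\<Omega> \<union> \<Gamma> \<in> sets borel"
      using assms(8,9) by simp
    from annulus_energy_le_kernel_energy[OF assms(1-3) less_imp_le[OF assms(4)] assms(5) f assms(8) this]
    show ?thesis
      unfolding E_def by (rule ennreal_mult_le_iff_le_inverse_mult[OF assms(4), THEN iffD1])
  qed
  also have "\<dots> \<le> ennreal M * E"
    by (intro mult_right_mono ennreal_leI) (auto simp: M_def)
  finally have energy: "annulus_energy \<nu> \<delta> \<epsilon> p f \<Omega> (\<Omega>' \<union> \<Gamma>) \<le> ennreal M * E" .
  have "\<Omega> - \<Omega>' \<in> null_sets \<nu>"
    using assms(2,8,11,13) by (simp add: null_sets_def emeasure_eq_measure)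
  then have "AE x in \<nu>. x \<notin> \<Omega> - \<Omega>'"
    by (rule AE_not_in)
  then have "AE x in \<nu>. ennreal (\<bar>u x\<bar> powr p) * indicator \<Omega> x = ennreal (\<bar>f x\<bar> powr p) * indicator \<Omega>' x"
    by eventually_elim (use assms(12) in \<open>auto simp: f_def split: split_indicator\<close>)
  then have "(\<integral>\<^sup>+x\<in>\<Omega>. ennreal (\<bar>u x\<bar> powr p) \<partial>\<nu>) = (\<integral>\<^sup>+x\<in>\<Omega>'. ennreal (\<bar>f x\<bar> powr p) \<partial>\<nu>)"
    by (rule nn_integral_cong_AE)
  also have "\<dots> \<le> (\<integral>\<^sup>+x\<in>annulus_layer \<nu> \<delta> \<epsilon> \<theta> \<Omega>' \<Gamma> k. ennreal (\<bar>f x\<bar> powr p) \<partial>\<nu>)"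
    using assms(14) by (intro nn_integral_mono) (auto split: split_indicator)
  also have "\<dots> \<le> ennreal (q ^ k) * (annulus_energy \<nu> \<delta> \<epsilon> p f \<Omega> (\<Omega>' \<union> \<Gamma>) + B)"
  proof -
    have "\<Omega>' \<union> \<Gamma> \<in> sets borel"
      using assms(9,11) by simp
    from annulus_layer_energy[OF assms(1,2) f assms(6-8,11,12,9) this subset_refl]
    show ?thesis
      unfolding q_def B_def .
  qed
  also have "\<dots> \<le> ennreal (q ^ k) * (ennreal M * E + ennreal M * B)"
  proof (rule mult_left_mono)
    have "B \<le> ennreal M * B"
      using mult_right_mono[of 1 "ennreal M" B] by (simp add: M_def ennreal_leI)
    then show "annulus_energy \<nu> \<delta> \<epsilon> p f \<Omega> (\<Omega>' \<union> \<Gamma>) + B \<le> ennreal M * E + ennreal M * B"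
      using energy by (rule add_mono[rotated])
  qed simp
  also have "\<dots> = ennreal (q ^ k * M) * (E + B)"
    using \<open>1 \<le> q\<close> by (simp add: M_def ennreal_mult distrib_left mult.assoc)
  finally have bound: "(\<integral>\<^sup>+x\<in>\<Omega>. ennreal (\<bar>u x\<bar> powr p) \<partial>\<nu>) \<le> ennreal (q ^ k * M) * (E + B)" .
  have "E = (\<integral>\<^sup>+x\<in>\<Omega>. (\<integral>\<^sup>+y\<in>\<Omega> \<union> \<Gamma>. ennreal (\<bar>(if y \<in> \<Omega> then u y else \<psi> y) - u x\<bar> powr p) \<partial>(m x)) \<partial>\<nu>)"
    unfolding E_def f_def by (intro nn_integral_cong) (simp split: split_indicator)
  moreover have "B = (\<integral>\<^sup>+y\<in>\<Gamma>. ennreal (\<bar>\<psi> y\<bar> powr p) \<partial>\<nu>)"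
    unfolding B_def f_def using assms(10) by (intro nn_integral_cong) (auto split: split_indicator)
  ultimately show ?thesis
    using bound by (simp add: q_def M_def)
qed

lemma annulus_kernel_lower_bound:
  fixes \<nu> :: "'a::metric_space measure"
  assumes "finite_measure \<nu>" "sets \<nu> = sets borel" "\<alpha> > 0" "A \<in> sets borel"
    and "ennreal \<alpha> * emeasure \<nu> (A \<inter> annulus x \<delta> \<epsilon>) / emeasure \<nu> (annulus x \<delta> \<epsilon>) \<le> emeasure M A"
  shows "ennreal (\<alpha> / measure \<nu> (space \<nu>)) * emeasure \<nu> (A \<inter> annulus x \<delta> \<epsilon>) \<le> emeasure M A"
proof -
  interpret finite_measure \<nu>
    by fact
  define a k where "a = measure \<nu> (A \<inter> annulus x \<delta> \<epsilon>)" and "k = measure \<nu> (annulus x \<delta> \<epsilon>)"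
  have "a \<le> k"
    using assms(2,4) unfolding a_def k_def by (intro finite_measure_mono) auto
  have "k \<le> measure \<nu> (space \<nu>)"
    unfolding k_def by (rule bounded_measure)
  show ?thesis
  proof (cases "k = 0")
    case True
    then have "a = 0"
      using \<open>a \<le> k\<close> measure_nonneg[of \<nu> "A \<inter> annulus x \<delta> \<epsilon>"] by (simp add: a_def)
    then show ?thesis
      by (simp add: emeasure_eq_measure a_def)
  next
    case False
    then have "0 < k"
      by (simp add: k_def zero_less_measure_iff)
    have "\<alpha> / measure \<nu> (space \<nu>) * a \<le> \<alpha> * a / k"
      using \<open>0 < k\<close> \<open>k \<le> _\<close> assms(3) measure_nonneg[of \<nu>]
      by (simp add: a_def divide_left_mono mult_nonneg_nonneg)
    then have "ennreal (\<alpha> / measure \<nu> (space \<nu>)) * emeasure \<nu> (A \<inter> annulus x \<delta> \<epsilon>)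
        \<le> ennreal \<alpha> * emeasure \<nu> (A \<inter> annulus x \<delta> \<epsilon>) / emeasure \<nu> (annulus x \<delta> \<epsilon>)"
      using \<open>0 < k\<close> assms(3)
      by (simp add: emeasure_eq_measure a_def k_def ennreal_mult[symmetric] divide_ennreal ennreal_leI)
    then show ?thesis
      using assms(5) by (rule order_trans)
  qed
qed

lemma m_boundary_sets_borel:
  assumes "metric_random_walk_space m" "\<Omega> \<in> sets borel"
  shows "m_boundary m \<Omega> \<in> sets borel"
proof -
  have [measurable]: "(\<lambda>x. emeasure (m x) \<Omega>) \<in> borel_measurable borel"
    using assms unfolding metric_random_walk_space_def by blast
  show ?thesis
    unfolding m_boundary_def using assms(2) by measurable
qed

lemma annulus_null_outside_boundary:
  assumes "0 < \<beta>" "ennreal \<beta> * emeasure \<nu> (\<Omega> \<inter> annulus y \<delta> \<epsilon>) \<le> emeasure (m y) \<Omega>"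
    and "y \<notin> \<Omega> \<union> m_boundary m \<Omega>"
  shows "emeasure \<nu> (annulus y \<delta> \<epsilon> \<inter> \<Omega>) = 0"
proof -
  have "emeasure (m y) \<Omega> = 0"
    using assms(3) by (auto simp: m_boundary_def)
  then have "ennreal \<beta> * emeasure \<nu> (\<Omega> \<inter> annulus y \<delta> \<epsilon>) = 0"
    using assms(2) by simp
  then show ?thesis
    using assms(1) by (simp add: Int_commute)
qed

lemma poincare_ineq_of_annulus_kernel:
  fixes m :: "'a::polish_space \<Rightarrow> 'a measure" and \<nu> :: "'a measure"
  assumes "metric_random_walk_space m" "sets \<nu> = sets borel" "emeasure \<nu> UNIV < \<infinity>"
    and "length_space TYPE('a)" "doubling \<nu>" "\<Omega> \<in> sets borel" "bounded \<Omega>"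
    and "0 < emeasure \<nu> \<Omega>" "emeasure \<nu> \<Omega> < emeasure \<nu> UNIV"
    and "0 < \<alpha>" "\<And>x::'a. annulus x \<delta> \<epsilon> \<noteq> {}"
    and "\<And>x A. A \<in> sets borel \<Longrightarrow>
      ennreal \<alpha> * emeasure \<nu> (A \<inter> annulus x \<delta> \<epsilon>) / emeasure \<nu> (annulus x \<delta> \<epsilon>) \<le> emeasure (m x) A"
    and "1 \<le> p"
  shows "poincare_ineq m \<nu> \<Omega> p"
proof -
  have fm: "finite_measure \<nu>"
    using assms(3) sets_eq_imp_space_eq[OF assms(2)] by (intro finite_measureI) auto
  interpret finite_measure \<nu>
    by (fact fm)
  have sets_m: "\<And>x. sets (m x) = sets borel"
    using assms(1) unfolding metric_random_walk_space_def by auto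
  obtain c \<theta> where \<theta>: "0 < \<theta>" "\<theta> \<le> c" and c: "\<And>y. y \<in> \<Omega> \<Longrightarrow> 2 * c \<le> measure \<nu> (annulus y \<delta> \<epsilon>)"
    and expansion: "annulus_expansion \<nu> \<Omega> \<delta> \<epsilon> c \<theta>"
    using doubling_length_space_annulus_expansion[OF assms(5,2,3,4,6-9,11)] by blast
  define \<beta> where "\<beta> = \<alpha> / measure \<nu> (space \<nu>)"
  have "0 < measure \<nu> \<Omega>"
    using assms(8) by (simp add: emeasure_eq_measure)
  then have "0 < \<beta>"
    using bounded_measure[of \<Omega>] assms(10) by (simp add: \<beta>_def)
  have lower: "ennreal \<beta> * emeasure \<nu> (A \<inter> annulus x \<delta> \<epsilon>) \<le> emeasure (m x) A"
    if "A \<in> sets borel" for x A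
    unfolding \<beta>_def using fm assms(2,10) that assms(12)[OF that] by (rule annulus_kernel_lower_bound)
  then have lower_in_\<Omega>: "\<And>x A. x \<in> \<Omega> \<Longrightarrow> A \<in> sets borel \<Longrightarrow>
      ennreal \<beta> * emeasure \<nu> (A \<inter> annulus x \<delta> \<epsilon>) \<le> emeasure (m x) A"
    by blast
  have "0 \<le> p"
    using assms(13) by simp
  define \<Gamma> where "\<Gamma> = m_boundary m \<Omega>"
  have \<Gamma>: "\<Gamma> \<in> sets borel" "\<Gamma> \<inter> \<Omega> = {}"
    using m_boundary_sets_borel[OF assms(1,6)] by (auto simp: \<Gamma>_def m_boundary_def)
  have "emeasure \<nu> (annulus y \<delta> \<epsilon> \<inter> \<Omega>) = 0" if "y \<notin> \<Omega> \<union> \<Gamma>" for y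
    using annulus_null_outside_boundary[where m = m, OF \<open>0 < \<beta>\<close> lower[OF assms(6), of y]] that
    by (simp add: \<Gamma>_def)
  moreover have "\<Omega> \<union> \<Gamma> \<in> sets borel"
    using assms(6) \<Gamma>(1) by simp
  ultimately obtain \<Omega>' where \<Omega>': "\<Omega>' \<in> sets borel" "\<Omega>' \<subseteq> \<Omega>" "measure \<nu> (\<Omega> - \<Omega>') = 0"
    "\<And>y. y \<in> \<Omega>' \<Longrightarrow> measure \<nu> (annulus y \<delta> \<epsilon> - (\<Omega> \<union> \<Gamma>)) = 0"
    using annulus_ae_within[OF fm assms(2,6)] by blast
  obtain k where k: "\<Omega>' \<subseteq> annulus_layer \<nu> \<delta> \<epsilon> \<theta> \<Omega>' \<Gamma> k"
    using annulus_layers_exhaust[OF fm assms(2,6) \<Gamma>(1) \<Omega>' c \<theta> expansion] .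
  show ?thesis
  proof (rule poincare_ineq_of_bound)
    show "0 < (1 + 2 powr p / \<theta> * (1 + measure \<nu> \<Omega>)) ^ k * max (1 / \<beta>) 1"
      using \<theta>(1) by (simp add: add_pos_nonneg)
  next
    fix u \<psi> :: "'a \<Rightarrow> real"
    assume "u \<in> borel_measurable borel" "\<psi> \<in> borel_measurable borel"
    from annulus_poincare_bound[OF fm assms(2) sets_m \<open>0 < \<beta>\<close> lower_in_\<Omega> \<open>0 \<le> p\<close> \<theta>(1) assms(6) \<Gamma>
        \<Omega>'(1-3) k this]
    show "(\<integral>\<^sup>+x\<in>\<Omega>. ennreal (\<bar>u x\<bar> powr p) \<partial>\<nu>)
      \<le> ennreal ((1 + 2 powr p / \<theta> * (1 + measure \<nu> \<Omega>)) ^ k * max (1 / \<beta>) 1) *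
        ((\<integral>\<^sup>+x\<in>\<Omega>. (\<integral>\<^sup>+y\<in>\<Omega> \<union> m_boundary m \<Omega>.
            ennreal (\<bar>(if y \<in> \<Omega> then u y else \<psi> y) - u x\<bar> powr p) \<partial>(m x)) \<partial>\<nu>)
         + (\<integral>\<^sup>+y\<in>m_boundary m \<Omega>. ennreal (\<bar>\<psi> y\<bar> powr p) \<partial>\<nu>))"
      by (simp only: \<Gamma>_def)
  qed
qed

lemma annulus_form_of_kernel_bound:
  fixes \<nu> :: "'a::metric_space measure" and m :: "'a \<Rightarrow> 'a measure"
  assumes "\<exists>\<alpha>>0. \<exists>\<epsilon>>0.
          (\<forall>x. \<forall>A \<in> sets borel.
             ennreal \<alpha> * emeasure \<nu> (A \<inter> ball x \<epsilon>) / emeasure \<nu> (ball x \<epsilon>) \<le> emeasure (m x) A)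
        \<or> (\<exists>\<delta>. 0 < \<delta> \<and> \<delta> < \<epsilon> \<and> (\<forall>x.
             0 < emeasure \<nu> (ball x \<epsilon> - cball x \<delta>) \<and>
             (\<forall>A \<in> sets borel.
               ennreal \<alpha> * emeasure \<nu> (A \<inter> (ball x \<epsilon> - cball x \<delta>)) / emeasure \<nu> (ball x \<epsilon> - cball x \<delta>)
                 \<le> emeasure (m x) A)))"
  obtains \<alpha> \<delta> \<epsilon> where "0 < \<alpha>" "\<And>x::'a. annulus x \<delta> \<epsilon> \<noteq> {}"
    "\<And>x A. A \<in> sets borel \<Longrightarrow>
      ennreal \<alpha> * emeasure \<nu> (A \<inter> annulus x \<delta> \<epsilon>) / emeasure \<nu> (annulus x \<delta> \<epsilon>) \<le> emeasure (m x) A"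
proof -
  obtain \<alpha> \<epsilon> where "0 < \<alpha>" "0 < \<epsilon>" and cases:
    "(\<forall>x. \<forall>A \<in> sets borel.
        ennreal \<alpha> * emeasure \<nu> (A \<inter> ball x \<epsilon>) / emeasure \<nu> (ball x \<epsilon>) \<le> emeasure (m x) A)
     \<or> (\<exists>\<delta>. 0 < \<delta> \<and> \<delta> < \<epsilon> \<and> (\<forall>x.
        0 < emeasure \<nu> (ball x \<epsilon> - cball x \<delta>) \<and>
        (\<forall>A \<in> sets borel.
          ennreal \<alpha> * emeasure \<nu> (A \<inter> (ball x \<epsilon> - cball x \<delta>)) / emeasure \<nu> (ball x \<epsilon> - cball x \<delta>)
            \<le> emeasure (m x) A)))"
    using assms by blast
  from cases show thesis
  proof
    assume ball_bound: "\<forall>x. \<forall>A \<in> sets borel.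
      ennreal \<alpha> * emeasure \<nu> (A \<inter> ball x \<epsilon>) / emeasure \<nu> (ball x \<epsilon>) \<le> emeasure (m x) A"
    show thesis
    proof (rule that[of \<alpha> "-1" \<epsilon>])
      show "annulus x (-1) \<epsilon> \<noteq> {}" for x :: 'a
        using \<open>0 < \<epsilon>\<close> by (auto simp: annulus_def intro!: exI[of _ x])
      show "ennreal \<alpha> * emeasure \<nu> (A \<inter> annulus x (-1) \<epsilon>) / emeasure \<nu> (annulus x (-1) \<epsilon>) \<le> emeasure (m x) A"
        if "A \<in> sets borel" for x A
        using ball_bound that by (simp add: ball_eq_annulus[symmetric])
    qed fact
  next
    assume "\<exists>\<delta>. 0 < \<delta> \<and> \<delta> < \<epsilon> \<and> (\<forall>x.
        0 < emeasure \<nu> (ball x \<epsilon> - cball x \<delta>) \<and>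
        (\<forall>A \<in> sets borel.
          ennreal \<alpha> * emeasure \<nu> (A \<inter> (ball x \<epsilon> - cball x \<delta>)) / emeasure \<nu> (ball x \<epsilon> - cball x \<delta>)
            \<le> emeasure (m x) A))"
    then obtain \<delta> where shell_pos: "\<And>x. 0 < emeasure \<nu> (ball x \<epsilon> - cball x \<delta>)"
      and shell_bound: "\<And>x A. A \<in> sets borel \<Longrightarrow>
        ennreal \<alpha> * emeasure \<nu> (A \<inter> (ball x \<epsilon> - cball x \<delta>)) / emeasure \<nu> (ball x \<epsilon> - cball x \<delta>)
          \<le> emeasure (m x) A"
      by blast
    show thesis
    proof (rule that[of \<alpha> \<delta> \<epsilon>])
      show "annulus x \<delta> \<epsilon> \<noteq> {}" for x :: 'a
        using shell_pos[of x] unfolding annulus_eq_ball_Diff_cball by (metis emeasure_empty less_irrefl)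
      show "ennreal \<alpha> * emeasure \<nu> (A \<inter> annulus x \<delta> \<epsilon>) / emeasure \<nu> (annulus x \<delta> \<epsilon>) \<le> emeasure (m x) A"
        if "A \<in> sets borel" for x A
        unfolding annulus_eq_ball_Diff_cball using that by (rule shell_bound)
    qed fact
  qed
qed

theorem mainTheorem12:
  fixes m :: "'a::polish_space \<Rightarrow> 'a measure" and \<nu> :: "'a measure" and \<Omega> :: "'a set"
  assumes "metric_random_walk_space m"
    and "invariant_measure m \<nu>" and "reversible_measure m \<nu>"
    and "emeasure \<nu> UNIV < \<infinity>" and "ergodic m \<nu>"
    and "length_space TYPE('a)" and "doubling \<nu>"
    and "\<Omega> \<in> sets borel" and "bounded \<Omega>"
    and "0 < emeasure \<nu> \<Omega>" and "emeasure \<nu> \<Omega> < emeasure \<nu> UNIV"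
    and "\<exists>\<alpha>>0. \<exists>\<epsilon>>0.
          (\<forall>x. \<forall>A \<in> sets borel.
             ennreal \<alpha> * emeasure \<nu> (A \<inter> ball x \<epsilon>) / emeasure \<nu> (ball x \<epsilon>) \<le> emeasure (m x) A)
        \<or> (\<exists>\<delta>. 0 < \<delta> \<and> \<delta> < \<epsilon> \<and> (\<forall>x.
             0 < emeasure \<nu> (ball x \<epsilon> - cball x \<delta>) \<and>
             (\<forall>A \<in> sets borel.
               ennreal \<alpha> * emeasure \<nu> (A \<inter> (ball x \<epsilon> - cball x \<delta>)) / emeasure \<nu> (ball x \<epsilon> - cball x \<delta>)
                 \<le> emeasure (m x) A)))"
  shows "\<forall>p::real. p \<ge> 1 \<longrightarrow> poincare_ineq m \<nu> \<Omega> p"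
proof (intro allI impI)
  fix p :: real
  assume "1 \<le> p"
  obtain \<alpha> \<delta> \<epsilon> where "0 < \<alpha>" "\<And>x::'a. annulus x \<delta> \<epsilon> \<noteq> {}"
    "\<And>x A. A \<in> sets borel \<Longrightarrow>
      ennreal \<alpha> * emeasure \<nu> (A \<inter> annulus x \<delta> \<epsilon>) / emeasure \<nu> (annulus x \<delta> \<epsilon>) \<le> emeasure (m x) A"
    using annulus_form_of_kernel_bound[OF assms(12)] by blast
  moreover have "sets \<nu> = sets borel"
    using assms(2) by (simp add: invariant_measure_def)
  ultimately show "poincare_ineq m \<nu> \<Omega> p"
    using \<open>1 \<le> p\<close> by (intro poincare_ineq_of_annulus_kernel[OF assms(1) _ assms(4,6-11)])
qed

end
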